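(* Let $G$ be a chordal graph and $t\ge 2$ an integer. Then the edge ideal $I(\overline{\mathcal{CH}_t(G)})$ has a $t$-linear resolution over any field $\mathbb{K}$.
   Context: All graphs are finite and simple, with $V(G)=\{x_1,\dots,x_n\}$ identified with variables of $R=\mathbb{K}[x_1,\dots,x_n]$. A graph is chordal if every induced cycle has length $3$. $\mathcal{CH}_t(G)$ is the $t$-uniform clutter on $V(G)$ whose edges are the $t$-element subsets inducing complete subgraphs. Its complement $\overline{\mathcal{CH}_t(G)}$ is the clutter whose edges are all $t$-element subsets of $V(G)$ that are not $t$-cliques of $G$. The edge ideal of a clutter $\mathcal{C}$ is $I(\mathcal{C})=(\prod_{x_i\in e}x_i : e\in E(\mathcal{C}))$. A homogeneous ideal $I$ has a $t$-linear resolution if all minimal generators have degree $t$ and $\beta_{i,i+j}(I)=0$ for all $i$ and all $j\ne t$. *)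

theory Defs
  imports Main "HOL-Library.Poly_Mapping"
begin

text \<open>A finite simple graph on the vertex type 'v (finite): V(G) = UNIV,
  adjacency E symmetric and irreflexive.\<close>

definition simple_graph :: "('v \<Rightarrow> 'v \<Rightarrow> bool) \<Rightarrow> bool" where
  "simple_graph E \<longleftrightarrow> (\<forall>u v. E u v \<longrightarrow> E v u) \<and> (\<forall>v. \<not> E v v)"

definition induced_cycle :: "('v \<Rightarrow> 'v \<Rightarrow> bool) \<Rightarrow> 'v list \<Rightarrow> bool" where
  "induced_cycle E cs \<longleftrightarrow> distinct cs \<and> length cs \<ge> 3 \<and>
     (\<forall>i < length cs. \<forall>j < length cs.
        E (cs ! i) (cs ! j) \<longleftrightarrow> (j = Suc i mod length cs \<or> i = Suc j mod length cs))"

definition chordal :: "('v \<Rightarrow> 'v \<Rightarrow> bool) \<Rightarrow> bool" where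
  "chordal E \<longleftrightarrow> (\<forall>cs. induced_cycle E cs \<longrightarrow> length cs = 3)"

definition is_clique :: "('v \<Rightarrow> 'v \<Rightarrow> bool) \<Rightarrow> 'v set \<Rightarrow> bool" where
  "is_clique E S \<longleftrightarrow> (\<forall>u\<in>S. \<forall>v\<in>S. u \<noteq> v \<longrightarrow> E u v)"

definition CH :: "nat \<Rightarrow> ('v \<Rightarrow> 'v \<Rightarrow> bool) \<Rightarrow> 'v set set" where
  "CH t E = {S. finite S \<and> card S = t \<and> is_clique E S}"

definition CH_compl :: "nat \<Rightarrow> ('v \<Rightarrow> 'v \<Rightarrow> bool) \<Rightarrow> 'v set set" where
  "CH_compl t E = {S. finite S \<and> card S = t \<and> S \<notin> CH t E}"

text \<open>Polynomials: finitely supported maps from monomials (exponent vectors) to coefficients.\<close>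
type_synonym ('v, 'k) mpoly = "('v \<Rightarrow>\<^sub>0 nat) \<Rightarrow>\<^sub>0 'k"

definition mdeg :: "('v \<Rightarrow>\<^sub>0 nat) \<Rightarrow> nat" where
  "mdeg m = (\<Sum>v\<in>Poly_Mapping.keys m. Poly_Mapping.lookup m v)"

definition homogeneous :: "('v, 'k::zero) mpoly \<Rightarrow> nat \<Rightarrow> bool" where
  "homogeneous p d \<longleftrightarrow> (\<forall>m\<in>Poly_Mapping.keys p. mdeg m = d)"

definition sqfree_monom :: "'v set \<Rightarrow> ('v, 'k::{zero,one}) mpoly" where
  "sqfree_monom S = Poly_Mapping.single (\<Sum>v\<in>S. Poly_Mapping.single v (1::nat)) 1"

definition ideal_gen :: "('v, 'k::comm_ring_1) mpoly set \<Rightarrow> ('v, 'k) mpoly set" where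
  "ideal_gen G = {p. \<exists>c. p = (\<Sum>g\<in>G. c g * g)}"

definition edge_ideal :: "'v set set \<Rightarrow> ('v, 'k::comm_ring_1) mpoly set" where
  "edge_ideal C = ideal_gen (sqfree_monom ` C)"

text \<open>A graded free resolution  ... -> F_2 -> F_1 -> F_0 -> I -> 0  of a homogeneous ideal I,
  described by
  - b i: rank of F_i;
  - dg i k: degree of the k-th basis element of F_i (F_i = sum_k R(-dg i k));
  - d i j k: for i = 0, d 0 0 k is the image in I of the k-th basis element of F_0;
             for i > 0, d i j k is the (j,k)-entry of the matrix of F_i -> F_(i-1).
  Elements of F_i are vectors v :: nat => R with v k = 0 for k >= b i.
  Target rank of the i-th map: 1 for i = 0 (the ring R itself), b (i-1) otherwise.\<close>

definition tgt_rank :: "(nat \<Rightarrow> nat) \<Rightarrow> nat \<Rightarrow> nat" where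
  "tgt_rank b i = (if i = 0 then 1 else b (i - 1))"

definition tgt_deg :: "(nat \<Rightarrow> nat \<Rightarrow> nat) \<Rightarrow> nat \<Rightarrow> nat \<Rightarrow> nat" where
  "tgt_deg dg i j = (if i = 0 then 0 else dg (i - 1) j)"

definition free_elems :: "(nat \<Rightarrow> nat) \<Rightarrow> nat \<Rightarrow> (nat \<Rightarrow> ('v, 'k::comm_ring_1) mpoly) set" where
  "free_elems b i = {v. \<forall>k\<ge>b i. v k = 0}"

definition res_map ::
  "(nat \<Rightarrow> nat) \<Rightarrow> (nat \<Rightarrow> nat \<Rightarrow> nat \<Rightarrow> ('v, 'k::comm_ring_1) mpoly) \<Rightarrow> nat
     \<Rightarrow> (nat \<Rightarrow> ('v, 'k) mpoly) \<Rightarrow> (nat \<Rightarrow> ('v, 'k) mpoly)" where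
  "res_map b d i v = (\<lambda>j. if j < tgt_rank b i then (\<Sum>k<b i. d i j k * v k) else 0)"

definition graded_free_resolution ::
  "('v, 'k::comm_ring_1) mpoly set \<Rightarrow> (nat \<Rightarrow> nat) \<Rightarrow> (nat \<Rightarrow> nat \<Rightarrow> nat)
     \<Rightarrow> (nat \<Rightarrow> nat \<Rightarrow> nat \<Rightarrow> ('v, 'k) mpoly) \<Rightarrow> bool" where
  "graded_free_resolution I b dg d \<longleftrightarrow>
     \<comment> \<open>the maps are homogeneous of degree 0\<close>
     (\<forall>i j k. j < tgt_rank b i \<longrightarrow> k < b i \<longrightarrow>
        (if tgt_deg dg i j \<le> dg i k then homogeneous (d i j k) (dg i k - tgt_deg dg i j)
         else d i j k = 0)) \<and>
     \<comment> \<open>F_0 maps onto I\<close>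
     (\<Union>v\<in>free_elems b 0. {res_map b d 0 v 0}) = I \<and>
     \<comment> \<open>exactness at every F_i\<close>
     (\<forall>i. {v\<in>free_elems b i. res_map b d i v = (\<lambda>_. 0)} = res_map b d (Suc i) ` free_elems b (Suc i))"

text \<open>Minimality: d_i(F_i) is contained in m F_(i-1) for all i >= 1, m = (x_v : v in V),
  i.e. all matrix entries have zero constant term.\<close>
definition minimal_graded_free_resolution ::
  "('v, 'k::comm_ring_1) mpoly set \<Rightarrow> (nat \<Rightarrow> nat) \<Rightarrow> (nat \<Rightarrow> nat \<Rightarrow> nat)
     \<Rightarrow> (nat \<Rightarrow> nat \<Rightarrow> nat \<Rightarrow> ('v, 'k) mpoly) \<Rightarrow> bool" where
  "minimal_graded_free_resolution I b dg d \<longleftrightarrow>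
     graded_free_resolution I b dg d \<and>
     (\<forall>i j k. 0 < i \<longrightarrow> Poly_Mapping.lookup (d i j k) 0 = 0)"

definition betti_of_res :: "(nat \<Rightarrow> nat) \<Rightarrow> (nat \<Rightarrow> nat \<Rightarrow> nat) \<Rightarrow> nat \<Rightarrow> nat \<Rightarrow> nat" where
  "betti_of_res b dg i j = card {k. k < b i \<and> dg i k = j}"

text \<open>I has a t-linear resolution: (all minimal generators have degree t, and)
  beta_{i,i+j}(I) = 0 for all i and all j <> t, computed from a minimal graded free
  resolution of I.  (Graded Betti numbers do not depend on the chosen minimal resolution.)
  The generator condition is beta_{0,j} = 0 for j <> t, since the basis of F_0 maps to a
  minimal homogeneous generating set of I.\<close>
definition has_linear_resolution :: "('v, 'k::comm_ring_1) mpoly set \<Rightarrow> nat \<Rightarrow> bool" where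
  "has_linear_resolution I t \<longleftrightarrow>
     (\<exists>b dg d. minimal_graded_free_resolution I b dg d \<and>
        (\<forall>i j. j \<noteq> t \<longrightarrow> betti_of_res b dg i (i + j) = 0))"

end

theory Submission
  imports Defs
begin

(*
  Chordality yields, by Dirac's lemma on simplicial vertices, a perfect elimination ordering
  of the vertices.  Compare t-sets by the largest vertex, in this ordering, of their symmetric
  difference, and add the generators x_u of the ideal of non-cliques in decreasing order.  For
  an earlier non-clique g, exchanging a suitable vertex of u for the largest vertex a of g - u
  gives an earlier non-clique differing from u by a alone; hence every colon ideal
  (earlier generators) : x_u is generated by variables (linear quotients).  Ideals of
  variables have linear resolutions (Koszul complexes), and the mapping cone of a lift of
  multiplication by x_u, chosen with linear entries, extends a linear resolution of the
  earlier generators to one of the larger ideal.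
*)

section \<open>Homogeneous polynomials\<close>

lemma poly_mapping_expansion:
  "p = (\<Sum>m\<in>Poly_Mapping.keys p. Poly_Mapping.single m (Poly_Mapping.lookup p m))"
proof (rule poly_mapping_eqI)
  fix k
  show "Poly_Mapping.lookup p k =
    Poly_Mapping.lookup (\<Sum>m\<in>Poly_Mapping.keys p. Poly_Mapping.single m (Poly_Mapping.lookup p m)) k"
    by (cases "k \<in> Poly_Mapping.keys p")
       (simp_all add: lookup_sum lookup_single when_def in_keys_iff sum.delta)
qed

lemma mdeg_eq_sum_superset:
  assumes "finite A" "Poly_Mapping.keys m \<subseteq> A"
  shows "mdeg m = (\<Sum>v\<in>A. Poly_Mapping.lookup m v)"
  unfolding mdeg_def
  by (rule sum.mono_neutral_left) (use assms in \<open>auto simp: in_keys_iff\<close>)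

lemma mdeg_add: "mdeg (a + b) = mdeg a + mdeg b"
proof -
  let ?A = "Poly_Mapping.keys a \<union> Poly_Mapping.keys b"
  have "mdeg (a + b) = (\<Sum>v\<in>?A. Poly_Mapping.lookup (a + b) v)"
    by (rule mdeg_eq_sum_superset) (auto dest: keys_add[THEN subsetD])
  also have "\<dots> = (\<Sum>v\<in>?A. Poly_Mapping.lookup a v) + (\<Sum>v\<in>?A. Poly_Mapping.lookup b v)"
    by (simp add: lookup_add sum.distrib)
  also have "\<dots> = mdeg a + mdeg b"
    by (simp add: mdeg_eq_sum_superset[symmetric])
  finally show ?thesis .
qed

lemma mdeg_single: "mdeg (Poly_Mapping.single v n) = n"
  by (simp add: mdeg_def)

lemma homogeneous_zero [simp]: "homogeneous 0 d"
  by (simp add: homogeneous_def)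

lemma homogeneous_add: "homogeneous p d \<Longrightarrow> homogeneous q d \<Longrightarrow> homogeneous (p + q) d"
  unfolding homogeneous_def using keys_add[of p q] by auto

lemma homogeneous_uminus: "homogeneous (p :: ('v, 'k::ab_group_add) mpoly) d \<Longrightarrow> homogeneous (- p) d"
  unfolding homogeneous_def by (simp add: in_keys_iff)

lemma homogeneous_sum: "(\<And>x. x \<in> A \<Longrightarrow> homogeneous (f x) d) \<Longrightarrow> homogeneous (sum f A) d"
  by (induction A rule: infinite_finite_induct) (auto intro: homogeneous_add)

lemma homogeneous_mult:
  fixes p q :: "('v, 'k::comm_ring_1) mpoly"
  shows "homogeneous p a \<Longrightarrow> homogeneous q b \<Longrightarrow> homogeneous (p * q) (a + b)"
  unfolding homogeneous_def using keys_mult[of p q] by (force simp: mdeg_add)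

lemma homogeneous_single: "homogeneous (Poly_Mapping.single m c) (mdeg m)"
  by (simp add: homogeneous_def)

lemma homogeneous_1_lookup_zero: "homogeneous p 1 \<Longrightarrow> Poly_Mapping.lookup p 0 = 0"
  unfolding homogeneous_def by (metis in_keys_iff mdeg_single single_zero zero_neq_one)

definition hcomp :: "nat \<Rightarrow> ('v, 'k::comm_ring_1) mpoly \<Rightarrow> ('v, 'k) mpoly" where
  "hcomp n p = (\<Sum>m\<in>{m\<in>Poly_Mapping.keys p. mdeg m = n}. Poly_Mapping.single m (Poly_Mapping.lookup p m))"

lemma lookup_hcomp:
  "Poly_Mapping.lookup (hcomp n p) m = (if mdeg m = n then Poly_Mapping.lookup p m else 0)"
  unfolding hcomp_def
  by (cases "m \<in> Poly_Mapping.keys p")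
     (auto simp: lookup_sum lookup_single when_def in_keys_iff sum.delta)

lemma hcomp_add: "hcomp n (p + q) = hcomp n p + hcomp n q"
  by (rule poly_mapping_eqI) (simp add: lookup_hcomp lookup_add)

lemma hcomp_sum: "hcomp n (sum f A) = (\<Sum>x\<in>A. hcomp n (f x))"
  by (induction A rule: infinite_finite_induct)
     (auto simp: hcomp_add intro: poly_mapping_eqI simp: lookup_hcomp)

lemma homogeneous_hcomp: "homogeneous (hcomp n p) n"
  unfolding homogeneous_def by (auto simp: in_keys_iff lookup_hcomp split: if_splits)

lemma hcomp_homogeneous: "homogeneous p n \<Longrightarrow> hcomp n p = p"
  by (rule poly_mapping_eqI) (auto simp: lookup_hcomp homogeneous_def in_keys_iff)

lemma hcomp_homogeneous_other: "homogeneous p k \<Longrightarrow> k \<noteq> n \<Longrightarrow> hcomp n p = 0"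
  by (rule poly_mapping_eqI) (auto simp: lookup_hcomp homogeneous_def in_keys_iff)

lemma sum_hcomp: "(\<Sum>d\<in>mdeg ` Poly_Mapping.keys q. hcomp d q) = q"
proof (rule poly_mapping_eqI)
  fix m
  have "Poly_Mapping.lookup (\<Sum>d\<in>mdeg ` Poly_Mapping.keys q. hcomp d q) m
      = (\<Sum>d\<in>mdeg ` Poly_Mapping.keys q. if mdeg m = d then Poly_Mapping.lookup q m else 0)"
    by (simp add: lookup_sum lookup_hcomp)
  also have "\<dots> = Poly_Mapping.lookup q m"
    by (auto simp: sum.delta in_keys_iff)
  finally show "Poly_Mapping.lookup (\<Sum>d\<in>mdeg ` Poly_Mapping.keys q. hcomp d q) m = Poly_Mapping.lookup q m" .
qed

lemma hcomp_mult_homogeneous: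
  fixes p q :: "('v, 'k::comm_ring_1) mpoly"
  assumes hp: "homogeneous p e"
  shows "hcomp (N + e) (p * q) = p * hcomp N q"
proof -
  let ?D = "mdeg ` Poly_Mapping.keys q"
  have hom: "homogeneous (p * hcomp d q) (e + d)" for d
    by (rule homogeneous_mult[OF hp homogeneous_hcomp])
  have "hcomp (N + e) (p * q) = (\<Sum>d\<in>?D. hcomp (N + e) (p * hcomp d q))"
    by (subst sum_hcomp[of q, symmetric]) (simp add: sum_distrib_left hcomp_sum)
  also have "\<dots> = (\<Sum>d\<in>?D. if d = N then p * hcomp d q else 0)"
    by (rule sum.cong[OF refl])
       (use hcomp_homogeneous[OF hom] hcomp_homogeneous_other[OF hom] in \<open>auto simp: add.commute\<close>)
  also have "\<dots> = p * hcomp N q"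
  proof -
    have "N \<notin> ?D \<Longrightarrow> hcomp N q = 0"
      by (rule poly_mapping_eqI) (auto simp: lookup_hcomp in_keys_iff)
    then show ?thesis by (auto simp: sum.delta)
  qed
  finally show ?thesis .
qed

section \<open>Squarefree monomial ideals\<close>

lemma exists_add_iff_lookup_le:
  "(\<exists>h. n = g + h) \<longleftrightarrow> (\<forall>v. Poly_Mapping.lookup g v \<le> Poly_Mapping.lookup (n :: 'v \<Rightarrow>\<^sub>0 nat) v)"
proof
  assume "\<forall>v. Poly_Mapping.lookup g v \<le> Poly_Mapping.lookup n v"
  then have "n = g + (n - g)"
    by (intro poly_mapping_eqI) (simp add: lookup_add lookup_minus)
  then show "\<exists>h. n = g + h" by blast
qed (auto simp: lookup_add)

lemma lookup_mult_single_one: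
  fixes p :: "('v, 'k::comm_ring_1) mpoly"
  shows "Poly_Mapping.lookup (p * Poly_Mapping.single u 1) k =
     (if \<exists>n. k = n + u then Poly_Mapping.lookup p (k - u) else 0)"
proof -
  have "p * Poly_Mapping.single u 1 =
      (\<Sum>n\<in>Poly_Mapping.keys p. Poly_Mapping.single (n + u) (Poly_Mapping.lookup p n))"
    by (subst poly_mapping_expansion[of p]) (simp add: sum_distrib_right mult_single)
  then have "Poly_Mapping.lookup (p * Poly_Mapping.single u 1) k =
      (\<Sum>n\<in>Poly_Mapping.keys p. if n + u = k then Poly_Mapping.lookup p n else 0)"
    by (simp add: lookup_sum lookup_single when_def)
  also have "\<dots> = (if \<exists>n. k = n + u then Poly_Mapping.lookup p (k - u) else 0)"
  proof (cases "\<exists>n. k = n + u")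
    case True
    then obtain n where k: "k = n + u" by blast
    have "(\<Sum>n'\<in>Poly_Mapping.keys p. if n' + u = k then Poly_Mapping.lookup p n' else 0)
        = (\<Sum>n'\<in>Poly_Mapping.keys p. if n' = n then Poly_Mapping.lookup p n' else 0)"
      by (rule sum.cong) (auto simp: k)
    then show ?thesis using k by (simp add: sum.delta in_keys_iff)
  qed (auto intro!: sum.neutral)
  finally show ?thesis .
qed

lemma keys_mult_single_one:
  fixes p :: "('v, 'k::comm_ring_1) mpoly"
  shows "Poly_Mapping.keys (p * Poly_Mapping.single u 1) = (\<lambda>n. n + u) ` Poly_Mapping.keys p"
proof -
  have "k \<in> Poly_Mapping.keys (p * Poly_Mapping.single u 1) \<longleftrightarrow> k \<in> (\<lambda>n. n + u) ` Poly_Mapping.keys p" for k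
    by (auto simp: in_keys_iff lookup_mult_single_one)
  then show ?thesis by blast
qed

definition monom :: "('v \<Rightarrow>\<^sub>0 nat) \<Rightarrow> ('v, 'k::comm_ring_1) mpoly" where
  "monom m = Poly_Mapping.single m 1"

lemma inj_monom: "inj (monom :: ('v \<Rightarrow>\<^sub>0 nat) \<Rightarrow> ('v, 'k::comm_ring_1) mpoly)"
  unfolding monom_def inj_def by (metis lookup_single_eq lookup_single_not_eq one_neq_zero)

lemma homogeneous_monom: "homogeneous (monom m) (mdeg m)"
  unfolding monom_def by (rule homogeneous_single)

lemma ideal_gen_monom_memI:
  fixes M :: "('v \<Rightarrow>\<^sub>0 nat) set"
  assumes fin: "finite M" and divisible: "\<forall>n\<in>Poly_Mapping.keys p. \<exists>g\<in>M. \<exists>h. n = g + h"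
  shows "(p :: ('v, 'k::comm_ring_1) mpoly) \<in> ideal_gen (monom ` M)"
proof -
  define K where "K = Poly_Mapping.keys p"
  define sel where "sel n = (SOME g. g \<in> M \<and> (\<exists>h. n = g + h))" for n
  have sel: "sel n \<in> M \<and> (\<exists>h. n = sel n + h)" if "n \<in> K" for n
    unfolding sel_def by (rule someI_ex) (use divisible that K_def in blast)
  define quot where "quot n = (SOME h. n = sel n + h)" for n
  have quot: "n = quot n + sel n" if "n \<in> K" for n
    unfolding quot_def using someI_ex[of "\<lambda>h. n = sel n + h"] sel[OF that] by (simp add: add.commute)
  define c where "c x = (\<Sum>n\<in>{n\<in>K. monom (sel n) = x}.
      Poly_Mapping.single (quot n) (Poly_Mapping.lookup p n))" for x :: "('v, 'k) mpoly"
  have "(\<Sum>x\<in>monom ` M. c x * x) = (\<Sum>g\<in>M. c (monom g) * monom g)"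
    by (rule sum.reindex[unfolded comp_def]) (use inj_monom in \<open>auto intro: inj_on_subset\<close>)
  also have "\<dots> = (\<Sum>g\<in>M. \<Sum>n\<in>{n\<in>K. sel n = g}. Poly_Mapping.single n (Poly_Mapping.lookup p n))"
  proof (rule sum.cong[OF refl])
    fix g assume "g \<in> M"
    have e: "{n\<in>K. monom (sel n) = (monom g :: ('v, 'k) mpoly)} = {n\<in>K. sel n = g}"
      using inj_monom[where 'k='k] by (auto simp: inj_def)
    show "c (monom g) * monom g =
        (\<Sum>n\<in>{n\<in>K. sel n = g}. Poly_Mapping.single n (Poly_Mapping.lookup p n))"
      unfolding c_def e sum_distrib_right
      by (rule sum.cong[OF refl]) (use quot in \<open>auto simp: monom_def mult_single\<close>)
  qed
  also have "\<dots> = (\<Sum>n\<in>K. Poly_Mapping.single n (Poly_Mapping.lookup p n))"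
    by (rule sum.group) (use fin sel K_def in auto)
  also have "\<dots> = p" unfolding K_def by (rule poly_mapping_expansion[symmetric])
  finally show ?thesis unfolding ideal_gen_def by blast
qed

lemma mem_ideal_gen_monom_iff:
  fixes M :: "('v \<Rightarrow>\<^sub>0 nat) set"
  assumes "finite M"
  shows "(p :: ('v, 'k::comm_ring_1) mpoly) \<in> ideal_gen (monom ` M) \<longleftrightarrow>
         (\<forall>n\<in>Poly_Mapping.keys p. \<exists>g\<in>M. \<exists>h. n = g + h)"
proof
  assume "p \<in> ideal_gen (monom ` M)"
  then obtain c where p: "p = (\<Sum>x\<in>monom ` M. c x * x)" unfolding ideal_gen_def by blast
  show "\<forall>n\<in>Poly_Mapping.keys p. \<exists>g\<in>M. \<exists>h. n = g + h"
  proof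
    fix n assume "n \<in> Poly_Mapping.keys p"
    then have "n \<in> (\<Union>x\<in>monom ` M. Poly_Mapping.keys (c x * x))"
      using keys_sum[of "\<lambda>x. c x * x" "monom ` M"] p by blast
    then obtain g where "g \<in> M" "n \<in> (\<lambda>n. n + g) ` Poly_Mapping.keys (c (monom g))"
      by (auto simp: monom_def keys_mult_single_one)
    then show "\<exists>g\<in>M. \<exists>h. n = g + h" by (metis add.commute imageE)
  qed
qed (rule ideal_gen_monom_memI[OF assms])

lemma mult_monom_mem_ideal_gen_monom_iff:
  fixes M :: "('v \<Rightarrow>\<^sub>0 nat) set"
  assumes "finite M"
  shows "(p :: ('v, 'k::comm_ring_1) mpoly) * monom u \<in> ideal_gen (monom ` M) \<longleftrightarrow>
         (\<forall>n\<in>Poly_Mapping.keys p. \<exists>g\<in>M. \<exists>h. n + u = g + h)"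
  unfolding mem_ideal_gen_monom_iff[OF assms] by (simp add: monom_def keys_mult_single_one)

definition sqfree_exp :: "'v set \<Rightarrow> ('v \<Rightarrow>\<^sub>0 nat)" where
  "sqfree_exp S = (\<Sum>v\<in>S. Poly_Mapping.single v 1)"

lemma lookup_sqfree_exp:
  "finite S \<Longrightarrow> Poly_Mapping.lookup (sqfree_exp S) v = (if v \<in> S then 1 else 0)"
  unfolding sqfree_exp_def by (simp add: lookup_sum lookup_single when_def)

lemma sqfree_monom_eq_monom: "sqfree_monom S = monom (sqfree_exp S)"
  unfolding sqfree_monom_def monom_def sqfree_exp_def by simp

lemma sqfree_monom_eq_iff:
  assumes "finite S" "finite T"
  shows "(sqfree_monom S :: ('v, 'k::comm_ring_1) mpoly) = sqfree_monom T \<longleftrightarrow> S = T"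
proof
  assume "(sqfree_monom S :: ('v, 'k) mpoly) = sqfree_monom T"
  then have "sqfree_exp S = sqfree_exp T"
    using inj_monom[where 'k='k] by (auto simp: sqfree_monom_eq_monom dest: injD)
  then show "S = T"
    using assms by (metis lookup_sqfree_exp one_neq_zero subsetI subset_antisym)
qed simp

lemma homogeneous_sqfree_monom:
  assumes "finite S"
  shows "homogeneous (sqfree_monom S :: ('v, 'k::comm_ring_1) mpoly) (card S)"
proof -
  have "mdeg (sqfree_exp S) = (\<Sum>v\<in>S. Poly_Mapping.lookup (sqfree_exp S) v)"
    by (rule mdeg_eq_sum_superset)
       (use assms in \<open>auto simp: in_keys_iff lookup_sqfree_exp split: if_splits\<close>)
  also have "\<dots> = card S" using assms by (simp add: lookup_sqfree_exp)
  finally show ?thesis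
    using homogeneous_monom[of "sqfree_exp S"] by (simp add: sqfree_monom_eq_monom)
qed

lemma exists_add_single_iff: "(\<exists>h. n = Poly_Mapping.single s 1 + h) \<longleftrightarrow> 0 < Poly_Mapping.lookup (n :: 'v \<Rightarrow>\<^sub>0 nat) s"
  unfolding exists_add_iff_lookup_le by (auto simp: lookup_single when_def)

lemma exists_add_sqfree_exp_iff:
  assumes "finite g" "finite u"
  shows "(\<exists>h. n + sqfree_exp u = sqfree_exp g + h) \<longleftrightarrow> g - u \<subseteq> Poly_Mapping.keys (n :: 'v \<Rightarrow>\<^sub>0 nat)"
  unfolding exists_add_iff_lookup_le using assms
  by (auto simp: lookup_sqfree_exp lookup_add in_keys_iff split: if_splits)

lemma ideal_gen_empty: "ideal_gen {} = {0}"
  by (simp add: ideal_gen_def)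

lemma ideal_gen_insert:
  assumes "finite G" "g \<notin> G"
  shows "ideal_gen (insert g G) = {p + r * g | p r. p \<in> ideal_gen G}"
proof
  show "ideal_gen (insert g G) \<subseteq> {p + r * g | p r. p \<in> ideal_gen G}"
  proof
    fix q assume "q \<in> ideal_gen (insert g G)"
    then obtain c where "q = (\<Sum>x\<in>insert g G. c x * x)" unfolding ideal_gen_def by blast
    then have "q = (\<Sum>x\<in>G. c x * x) + c g * g" using assms by (simp add: add.commute)
    moreover have "(\<Sum>x\<in>G. c x * x) \<in> ideal_gen G" unfolding ideal_gen_def by blast
    ultimately show "q \<in> {p + r * g | p r. p \<in> ideal_gen G}" by blast
  qed
next
  show "{p + r * g | p r. p \<in> ideal_gen G} \<subseteq> ideal_gen (insert g G)"
  proof clarify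
    fix p r assume "p \<in> ideal_gen G"
    then obtain c where p: "p = (\<Sum>x\<in>G. c x * x)" unfolding ideal_gen_def by blast
    have "(\<Sum>x\<in>G. (c(g := r)) x * x) = p" unfolding p by (rule sum.cong) (use assms in auto)
    then have "p + r * g = (\<Sum>x\<in>insert g G. (c(g := r)) x * x)"
      using assms by (simp add: add.commute)
    then show "p + r * g \<in> ideal_gen (insert g G)" unfolding ideal_gen_def by blast
  qed
qed

section \<open>Linear free resolutions\<close>

definition mat_vec ::
  "nat \<Rightarrow> (nat \<Rightarrow> nat \<Rightarrow> ('v, 'k::comm_ring_1) mpoly) \<Rightarrow> nat \<Rightarrow> (nat \<Rightarrow> ('v, 'k) mpoly) \<Rightarrow> nat \<Rightarrow> ('v, 'k) mpoly"
  where "mat_vec n A m v = (\<lambda>j. if j < n then (\<Sum>k<m. A j k * v k) else 0)"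

lemma res_map_eq_mat_vec: "res_map b d i = mat_vec (tgt_rank b i) (d i) (b i)"
  by (simp add: res_map_def mat_vec_def fun_eq_iff)

lemma mat_vec_in_free_elems: "b i = n \<Longrightarrow> mat_vec n A m v \<in> free_elems b i"
  by (simp add: free_elems_def mat_vec_def)

lemma mat_vec_add: "mat_vec n A m (\<lambda>k. v k + w k) = (\<lambda>j. mat_vec n A m v j + mat_vec n A m w j)"
  by (simp add: mat_vec_def fun_eq_iff distrib_left sum.distrib)

lemma mat_vec_uminus: "mat_vec n A m (\<lambda>k. - v k) = (\<lambda>j. - mat_vec n A m v j)"
  by (simp add: mat_vec_def fun_eq_iff sum_negf)

lemma mat_vec_zero: "mat_vec n A m (\<lambda>k. 0) = (\<lambda>j. 0)"
  by (simp add: mat_vec_def fun_eq_iff)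

lemma mat_vec_mat_vec: "mat_vec n A m (mat_vec m B p v) = mat_vec n (\<lambda>j k. \<Sum>l<m. A j l * B l k) p v"
proof (rule ext)
  fix j
  show "mat_vec n A m (mat_vec m B p v) j = mat_vec n (\<lambda>j k. \<Sum>l<m. A j l * B l k) p v j"
  proof (cases "j < n")
    case True
    have "(\<Sum>l<m. A j l * (if l < m then \<Sum>k<p. B l k * v k else 0)) = (\<Sum>l<m. \<Sum>k<p. A j l * B l k * v k)"
      by (rule sum.cong) (auto simp: sum_distrib_left mult.assoc)
    also have "\<dots> = (\<Sum>k<p. (\<Sum>l<m. A j l * B l k) * v k)"
      by (subst sum.swap) (simp add: sum_distrib_right)
    finally show ?thesis using True by (simp add: mat_vec_def)
  qed (simp add: mat_vec_def)
qed

lemma mat_vec_cong: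
  "(\<And>j k. j < n \<Longrightarrow> k < m \<Longrightarrow> A j k = A' j k) \<Longrightarrow> (\<And>k. k < m \<Longrightarrow> v k = v' k) \<Longrightarrow>
   mat_vec n A m v = mat_vec n A' m v'"
  by (auto simp: mat_vec_def fun_eq_iff intro!: sum.cong)

lemma mat_vec_unit:
  "c < m \<Longrightarrow> mat_vec n A m (\<lambda>k. if k = c then 1 else 0) = (\<lambda>j. if j < n then A j c else 0)"
  by (simp add: mat_vec_def fun_eq_iff if_distrib sum.delta cong: if_cong)

lemma res_map_add: "res_map b d i (\<lambda>k. f k + g k) = (\<lambda>j. res_map b d i f j + res_map b d i g j)"
  unfolding res_map_eq_mat_vec by (rule mat_vec_add)

lemma res_map_uminus: "res_map b d i (\<lambda>k. - f k) = (\<lambda>j. - res_map b d i f j)"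
  unfolding res_map_eq_mat_vec by (rule mat_vec_uminus)

lemma res_map_Suc_in_free_elems: "res_map b d (Suc i) v \<in> free_elems b i"
  unfolding res_map_eq_mat_vec by (rule mat_vec_in_free_elems) (simp add: tgt_rank_def)

lemma free_elems_add: "f \<in> free_elems b i \<Longrightarrow> g \<in> free_elems b i \<Longrightarrow> (\<lambda>k. f k + g k) \<in> free_elems b i"
  by (simp add: free_elems_def)

lemma free_elems_uminus: "f \<in> free_elems b i \<Longrightarrow> (\<lambda>k. - f k) \<in> free_elems b i"
  by (simp add: free_elems_def)

definition unit_vec :: "nat \<Rightarrow> nat \<Rightarrow> ('v, 'k::comm_ring_1) mpoly" where
  "unit_vec c = (\<lambda>k. if k = c then 1 else 0)"

lemma unit_vec_in_free_elems: "c < b i \<Longrightarrow> unit_vec c \<in> free_elems b i"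
  by (simp add: unit_vec_def free_elems_def)

lemma res_map_unit_vec:
  "c < b i \<Longrightarrow> res_map b d i (unit_vec c) = (\<lambda>j. if j < tgt_rank b i then d i j c else 0)"
  unfolding res_map_eq_mat_vec unit_vec_def by (rule mat_vec_unit)

text \<open>Preimages under a matrix of homogeneous forms may be chosen homogeneous.\<close>

lemma mat_vec_hcomp:
  assumes "\<And>j k. j < n \<Longrightarrow> k < m \<Longrightarrow> homogeneous (A j k) e"
    and "\<And>j. j < n \<Longrightarrow> homogeneous (mat_vec n A m x j) (N + e)"
  shows "mat_vec n A m (\<lambda>k. hcomp N (x k)) = mat_vec n A m x"
proof (rule ext)
  fix j
  show "mat_vec n A m (\<lambda>k. hcomp N (x k)) j = mat_vec n A m x j"
  proof (cases "j < n")
    case True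
    have "(\<Sum>k<m. A j k * hcomp N (x k)) = hcomp (N + e) (\<Sum>k<m. A j k * x k)"
      by (simp add: hcomp_sum hcomp_mult_homogeneous[OF assms(1)[OF True]])
    also have "\<dots> = (\<Sum>k<m. A j k * x k)"
      using hcomp_homogeneous[OF assms(2)[OF True]] True by (simp add: mat_vec_def)
    finally show ?thesis using True by (simp add: mat_vec_def)
  qed (simp add: mat_vec_def)
qed

text \<open>Placing the basis of \<open>F\<^sub>i\<close> in degree \<open>t + i\<close> turns such a resolution into a minimal
  graded one whose Betti numbers are concentrated in degrees \<open>t + i\<close>.\<close>

definition linear_free_resolution ::
  "('v, 'k::comm_ring_1) mpoly set \<Rightarrow> nat \<Rightarrow> (nat \<Rightarrow> nat) \<Rightarrow> (nat \<Rightarrow> nat \<Rightarrow> nat \<Rightarrow> ('v, 'k) mpoly) \<Rightarrow> bool"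
  where "linear_free_resolution I t b d \<longleftrightarrow>
     (\<forall>k<b 0. homogeneous (d 0 0 k) t) \<and>
     (\<forall>i j k. 0 < i \<longrightarrow> j < tgt_rank b i \<longrightarrow> k < b i \<longrightarrow> homogeneous (d i j k) 1) \<and>
     (\<Union>v\<in>free_elems b 0. {res_map b d 0 v 0}) = I \<and>
     (\<forall>i. {v\<in>free_elems b i. res_map b d i v = (\<lambda>_. 0)} = res_map b d (Suc i) ` free_elems b (Suc i))"

context
  fixes I t b d
  assumes res: "linear_free_resolution I t b d"
begin

lemma linear_free_resolution_complex:
  "v \<in> free_elems b (Suc i) \<Longrightarrow> res_map b d i (res_map b d (Suc i) v) = (\<lambda>_. 0)"
  using res unfolding linear_free_resolution_def by blast

lemma linear_free_resolution_exact:
  "v \<in> free_elems b i \<Longrightarrow> res_map b d i v = (\<lambda>_. 0) \<Longrightarrow>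
   \<exists>w\<in>free_elems b (Suc i). v = res_map b d (Suc i) w"
  using res unfolding linear_free_resolution_def by blast

lemma linear_free_resolution_image:
  "p \<in> I \<longleftrightarrow> (\<exists>v\<in>free_elems b 0. p = res_map b d 0 v 0)"
  using res unfolding linear_free_resolution_def by blast

lemma linear_free_resolution_generator_degree: "k < b 0 \<Longrightarrow> homogeneous (d 0 0 k) t"
  using res unfolding linear_free_resolution_def by blast

lemma linear_free_resolution_linear:
  "j < b i \<Longrightarrow> k < b (Suc i) \<Longrightarrow> homogeneous (d (Suc i) j k) 1"
  using res unfolding linear_free_resolution_def tgt_rank_def by auto

end

lemma linear_free_resolution_zero_ideal: "linear_free_resolution {0} t (\<lambda>_. 0) (\<lambda>_ _ _. 0)"
  unfolding linear_free_resolution_def by (auto simp: free_elems_def res_map_def tgt_rank_def fun_eq_iff)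

text \<open>The minimality condition of \<^const>\<open>minimal_graded_free_resolution\<close> also constrains
  matrix entries outside the ranks, which \<^const>\<open>res_map\<close> never reads; they are set to zero.\<close>

definition truncate_matrices ::
  "(nat \<Rightarrow> nat) \<Rightarrow> (nat \<Rightarrow> nat \<Rightarrow> nat \<Rightarrow> ('v, 'k::comm_ring_1) mpoly) \<Rightarrow> nat \<Rightarrow> nat \<Rightarrow> nat \<Rightarrow> ('v, 'k) mpoly"
  where "truncate_matrices b d i j k = (if j < tgt_rank b i \<and> k < b i then d i j k else 0)"

lemma res_map_truncate_matrices: "res_map b (truncate_matrices b d) = res_map b d"
  unfolding res_map_eq_mat_vec by (intro ext mat_vec_cong) (auto simp: truncate_matrices_def)

lemma has_linear_resolution_if_linear_free_resolution:
  assumes "linear_free_resolution I t b d"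
  shows "has_linear_resolution I t"
proof -
  let ?dg = "\<lambda>i k. t + i"
  let ?d = "truncate_matrices b d"
  have res: "linear_free_resolution I t b ?d"
    using assms unfolding linear_free_resolution_def res_map_truncate_matrices
    by (auto simp: truncate_matrices_def tgt_rank_def)
  have "minimal_graded_free_resolution I b ?dg ?d"
    unfolding minimal_graded_free_resolution_def graded_free_resolution_def
  proof (intro conjI allI impI)
    fix i j k assume j: "j < tgt_rank b i" and k: "k < b i"
    show "if tgt_deg ?dg i j \<le> t + i then homogeneous (?d i j k) (t + i - tgt_deg ?dg i j) else ?d i j k = 0"
      using linear_free_resolution_generator_degree[OF res] linear_free_resolution_linear[OF res] j k
      by (cases i) (simp_all add: tgt_deg_def tgt_rank_def)
  next
    fix i j k :: nat assume "0 < i"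
    then show "Poly_Mapping.lookup (?d i j k) 0 = 0"
      using linear_free_resolution_linear[OF res, of j "i - 1" k]
      by (cases i) (auto simp: truncate_matrices_def tgt_rank_def intro: homogeneous_1_lookup_zero)
  qed (use res in \<open>auto simp: linear_free_resolution_def\<close>)
  moreover have "betti_of_res b ?dg i (i + j) = 0" if "j \<noteq> t" for i j
    using that by (simp add: betti_of_res_def)
  ultimately show ?thesis
    unfolding has_linear_resolution_def by blast
qed

section \<open>Mapping cones\<close>

lemma sum_lessThan_add: "(\<Sum>k<(n::nat) + m. h k) = (\<Sum>k<n. h k) + (\<Sum>c<m. h (n + c))"
proof -
  have "(\<Sum>k<n + m. h k) = (\<Sum>k<n. h k) + (\<Sum>k\<in>{n..<n + m}. h k)"
    by (metis add.commute atLeast0LessThan le_add2 sum.atLeastLessThan_concat zero_le)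
  also have "(\<Sum>k\<in>{n..<n + m}. h k) = (\<Sum>c<m. h (n + c))"
    using sum.shift_bounds_nat_ivl[of h 0 n m] by (simp add: atLeast0LessThan add.commute)
  finally show ?thesis .
qed

definition vec_join :: "nat \<Rightarrow> (nat \<Rightarrow> 'a) \<Rightarrow> (nat \<Rightarrow> 'a) \<Rightarrow> nat \<Rightarrow> 'a" where
  "vec_join n f g = (\<lambda>k. if k < n then f k else g (k - n))"

lemma vec_join_cong:
  "(\<And>k. k < n \<Longrightarrow> f k = f' k) \<Longrightarrow> (\<And>c. g c = g' c) \<Longrightarrow> vec_join n f g = vec_join n f' g'"
  by (auto simp: vec_join_def fun_eq_iff)

lemma vec_join_zero: "vec_join n (\<lambda>_. 0) (\<lambda>_. 0) = (\<lambda>_. 0)"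
  by (simp add: vec_join_def fun_eq_iff)

lemma vec_join_split: "v = vec_join n (\<lambda>k. if k < n then v k else 0) (\<lambda>c. v (n + c))"
  by (simp add: vec_join_def fun_eq_iff)

lemma vec_join_eq_zero: "vec_join n f g = (\<lambda>_. 0) \<Longrightarrow> (\<forall>k<n. f k = 0) \<and> (\<forall>c. g c = 0)"
  unfolding vec_join_def fun_eq_iff by (metis add_diff_cancel_left' not_add_less1)

text \<open>Given \<open>u\<close> of degree \<open>t\<close>, a linear resolution \<open>F\<close> of \<open>I\<close> and a linear resolution \<open>G\<close> of
  the colon ideal \<open>J = I : u\<close> generated in degree 1, the mapping cone of a lift of
  multiplication by \<open>u\<close> to a chain map \<open>G \<rightarrow> F\<close> resolves \<open>I + (u)\<close>, and it is again linear
  because the lift can be chosen with linear entries.\<close>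

locale mapping_cone =
  fixes I :: "('v, 'k::comm_ring_1) mpoly set" and t :: nat
    and bF :: "nat \<Rightarrow> nat" and dF :: "nat \<Rightarrow> nat \<Rightarrow> nat \<Rightarrow> ('v, 'k) mpoly"
    and J :: "('v, 'k) mpoly set" and bG :: "nat \<Rightarrow> nat" and dG :: "nat \<Rightarrow> nat \<Rightarrow> nat \<Rightarrow> ('v, 'k) mpoly"
    and u :: "('v, 'k) mpoly"
  assumes F: "linear_free_resolution I t bF dF" and G: "linear_free_resolution J 1 bG dG"
    and colon: "\<And>r. r \<in> J \<longleftrightarrow> r * u \<in> I" and homogeneous_u: "homogeneous u t"
begin

abbreviation rF where "rF \<equiv> res_map bF dF"
abbreviation rG where "rG \<equiv> res_map bG dG"

definition lifts_column0 :: "nat \<Rightarrow> (nat \<Rightarrow> ('v, 'k) mpoly) \<Rightarrow> bool" where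
  "lifts_column0 c x \<longleftrightarrow> (\<forall>l. homogeneous (x l) 1) \<and> rF 0 x = (\<lambda>j. if j < 1 then u * dG 0 0 c else 0)"

definition lifts_column :: "nat \<Rightarrow> (nat \<Rightarrow> nat \<Rightarrow> ('v, 'k) mpoly) \<Rightarrow> nat \<Rightarrow> (nat \<Rightarrow> ('v, 'k) mpoly) \<Rightarrow> bool" where
  "lifts_column k M c x \<longleftrightarrow>
     (\<forall>l. homogeneous (x l) 1) \<and> rF (Suc k) x = mat_vec (bF k) M (bG k) (rG (Suc k) (unit_vec c))"

lemma lifts_column0_exists:
  assumes c: "c < bG 0"
  shows "\<exists>x. lifts_column0 c x"
proof -
  have "dG 0 0 c = rG 0 (unit_vec c) 0"
    using c by (simp add: res_map_unit_vec tgt_rank_def)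
  then have "dG 0 0 c \<in> J"
    using linear_free_resolution_image[OF G] unit_vec_in_free_elems[of c bG 0, OF c] by blast
  then have "dG 0 0 c * u \<in> I" using colon by blast
  then obtain v where v: "v \<in> free_elems bF 0" "dG 0 0 c * u = rF 0 v 0"
    using linear_free_resolution_image[OF F] by blast
  have rv: "rF 0 v = (\<lambda>j. if j < 1 then u * dG 0 0 c else 0)"
    using v(2) by (auto simp: res_map_eq_mat_vec mat_vec_def tgt_rank_def fun_eq_iff mult.commute)
  have "mat_vec 1 (dF 0) (bF 0) (\<lambda>k. hcomp 1 (v k)) = mat_vec 1 (dF 0) (bF 0) v"
  proof (rule mat_vec_hcomp)
    show "homogeneous (dF 0 j k) t" if "j < 1" "k < bF 0" for j k
      using linear_free_resolution_generator_degree[OF F] that by simp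
    show "homogeneous (mat_vec 1 (dF 0) (bF 0) v j) (1 + t)" if "j < 1" for j
      using rv that homogeneous_mult[OF homogeneous_u linear_free_resolution_generator_degree[OF G c]]
      by (simp add: res_map_eq_mat_vec tgt_rank_def add.commute)
  qed
  then have "lifts_column0 c (\<lambda>k. hcomp 1 (v k))"
    unfolding lifts_column0_def using rv by (simp add: res_map_eq_mat_vec tgt_rank_def homogeneous_hcomp)
  then show ?thesis by blast
qed

lemma lifts_column_exists:
  assumes M_linear: "\<And>l c. c < bG k \<Longrightarrow> homogeneous (M l c) 1"
    and M_cycle: "\<And>g. g \<in> free_elems bG (Suc k) \<Longrightarrow> rF k (mat_vec (bF k) M (bG k) (rG (Suc k) g)) = (\<lambda>_. 0)"
    and c: "c < bG (Suc k)"
  shows "\<exists>x. lifts_column k M c x"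
proof -
  let ?y = "mat_vec (bF k) M (bG k) (rG (Suc k) (unit_vec c))"
  have "?y \<in> free_elems bF k" by (rule mat_vec_in_free_elems) simp
  moreover have "rF k ?y = (\<lambda>_. 0)" by (rule M_cycle[OF unit_vec_in_free_elems[of c bG, OF c]])
  ultimately obtain v where v: "v \<in> free_elems bF (Suc k)" "?y = rF (Suc k) v"
    using linear_free_resolution_exact[OF F] by blast
  let ?A = "mat_vec (bF k) (dF (Suc k)) (bF (Suc k))"
  have "?A (\<lambda>l. hcomp 1 (v l)) = ?A v"
  proof (rule mat_vec_hcomp)
    show "homogeneous (dF (Suc k) j l) 1" if "j < bF k" "l < bF (Suc k)" for j l
      using linear_free_resolution_linear[OF F] that by simp
    fix j assume j: "j < bF k"
    have "?A v j = ?y j" using v(2) by (simp add: res_map_eq_mat_vec tgt_rank_def)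
    also have "\<dots> = (\<Sum>c'<bG k. M j c' * dG (Suc k) c' c)"
      using j c by (simp add: res_map_unit_vec tgt_rank_def mat_vec_def)
    finally have "?A v j = (\<Sum>c'<bG k. M j c' * dG (Suc k) c' c)" .
    moreover have "homogeneous (\<Sum>c'<bG k. M j c' * dG (Suc k) c' c) (1 + 1)"
      by (rule homogeneous_sum, rule homogeneous_mult)
         (use M_linear linear_free_resolution_linear[OF G _ c] in auto)
    ultimately show "homogeneous (?A v j) (1 + 1)" by simp
  qed
  then have "lifts_column k M c (\<lambda>l. hcomp 1 (v l))"
    unfolding lifts_column_def using v(2) by (simp add: res_map_eq_mat_vec tgt_rank_def homogeneous_hcomp)
  then show ?thesis by blast
qed

text \<open>A chain map \<open>G \<rightarrow> F\<close> lifting multiplication by \<open>u\<close>, chosen column by column among the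
  lifts with linear entries.\<close>

primrec comparison :: "nat \<Rightarrow> nat \<Rightarrow> nat \<Rightarrow> ('v, 'k) mpoly" where
  "comparison 0 = (\<lambda>l c. (SOME x. lifts_column0 c x) l)"
| "comparison (Suc k) = (\<lambda>l c. (SOME x. lifts_column k (comparison k) c x) l)"

definition comparison_map :: "nat \<Rightarrow> (nat \<Rightarrow> ('v, 'k) mpoly) \<Rightarrow> nat \<Rightarrow> ('v, 'k) mpoly" where
  "comparison_map k g = mat_vec (bF k) (comparison k) (bG k) g"

lemma comparison_map_in_free_elems: "comparison_map k g \<in> free_elems bF k"
  unfolding comparison_map_def by (rule mat_vec_in_free_elems) simp

lemma comparison_map_uminus: "comparison_map i (\<lambda>k. - f k) = (\<lambda>j. - comparison_map i f j)"
  unfolding comparison_map_def by (rule mat_vec_uminus)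

lemma lifts_column0_comparison: "c < bG 0 \<Longrightarrow> lifts_column0 c (\<lambda>l. comparison 0 l c)"
  using someI_ex[OF lifts_column0_exists] by simp

lemma comparison_map_0: "rF 0 (comparison_map 0 g) = (\<lambda>j. if j < 1 then u * rG 0 g 0 else 0)"
proof -
  have "rF 0 (comparison_map 0 g) = mat_vec 1 (\<lambda>j c. \<Sum>l<bF 0. dF 0 j l * comparison 0 l c) (bG 0) g"
    unfolding comparison_map_def res_map_eq_mat_vec by (simp add: mat_vec_mat_vec tgt_rank_def)
  also have "\<dots> = mat_vec 1 (\<lambda>j c. u * dG 0 0 c) (bG 0) g"
  proof (rule mat_vec_cong)
    fix j c assume j: "j < (1::nat)" and c: "c < bG 0"
    have "rF 0 (\<lambda>l. comparison 0 l c) 0 = u * dG 0 0 c"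
      using lifts_column0_comparison[OF c] unfolding lifts_column0_def by simp
    then show "(\<Sum>l<bF 0. dF 0 j l * comparison 0 l c) = u * dG 0 0 c"
      using j by (simp add: res_map_eq_mat_vec mat_vec_def tgt_rank_def)
  qed simp
  also have "\<dots> = (\<lambda>j. if j < 1 then u * rG 0 g 0 else 0)"
    by (simp add: mat_vec_def res_map_eq_mat_vec tgt_rank_def sum_distrib_left mult.assoc fun_eq_iff)
  finally show ?thesis .
qed

lemma comparison_map_Suc_if_lifts:
  assumes "\<And>c. c < bG (Suc k) \<Longrightarrow> lifts_column k (comparison k) c (\<lambda>l. comparison (Suc k) l c)"
  shows "rF (Suc k) (comparison_map (Suc k) g) = comparison_map k (rG (Suc k) g)"
proof -
  let ?B = "\<lambda>j c. \<Sum>l<bF (Suc k). dF (Suc k) j l * comparison (Suc k) l c"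
  have "rF (Suc k) (comparison_map (Suc k) g) = mat_vec (bF k) ?B (bG (Suc k)) g"
    unfolding comparison_map_def res_map_eq_mat_vec by (simp add: mat_vec_mat_vec tgt_rank_def)
  also have "\<dots> = mat_vec (bF k) (\<lambda>j c. \<Sum>c'<bG k. comparison k j c' * dG (Suc k) c' c) (bG (Suc k)) g"
  proof (rule mat_vec_cong)
    fix j c assume j: "j < bF k" and c: "c < bG (Suc k)"
    have "rG (Suc k) (unit_vec c) = (\<lambda>j. if j < bG k then dG (Suc k) j c else 0)"
      using res_map_unit_vec[of c bG, OF c] by (simp add: tgt_rank_def)
    then have "rF (Suc k) (\<lambda>l. comparison (Suc k) l c) j = (\<Sum>c'<bG k. comparison k j c' * dG (Suc k) c' c)"
      using assms[OF c] j unfolding lifts_column_def by (simp add: mat_vec_def)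
    then show "?B j c = (\<Sum>c'<bG k. comparison k j c' * dG (Suc k) c' c)"
      using j by (simp add: res_map_eq_mat_vec mat_vec_def tgt_rank_def)
  qed simp
  also have "\<dots> = comparison_map k (rG (Suc k) g)"
    unfolding comparison_map_def res_map_eq_mat_vec by (simp add: mat_vec_mat_vec tgt_rank_def)
  finally show ?thesis .
qed

lemma comparison_linear_and_cycle:
  "(\<forall>l c. c < bG k \<longrightarrow> homogeneous (comparison k l c) 1) \<and>
   (\<forall>g\<in>free_elems bG (Suc k). rF k (comparison_map k (rG (Suc k) g)) = (\<lambda>_. 0))"
proof (induction k)
  case 0
  have "rF 0 (comparison_map 0 (rG (Suc 0) g)) = (\<lambda>_. 0)" if "g \<in> free_elems bG (Suc 0)" for g
    using comparison_map_0 linear_free_resolution_complex[OF G that] by (simp add: fun_eq_iff)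
  then show ?case using lifts_column0_comparison by (auto simp: lifts_column0_def)
next
  case (Suc k)
  have lifts: "lifts_column k (comparison k) c (\<lambda>l. comparison (Suc k) l c)" if "c < bG (Suc k)" for c
    using someI_ex[OF lifts_column_exists[OF _ _ that]] Suc.IH by (simp add: comparison_map_def)
  have "rF (Suc k) (comparison_map (Suc k) (rG (Suc (Suc k)) g)) = (\<lambda>_. 0)"
    if "g \<in> free_elems bG (Suc (Suc k))" for g
    using comparison_map_Suc_if_lifts[OF lifts] linear_free_resolution_complex[OF G that]
    by (simp add: comparison_map_def mat_vec_zero)
  then show ?case using lifts by (auto simp: lifts_column_def)
qed

lemma comparison_linear: "c < bG k \<Longrightarrow> homogeneous (comparison k l c) 1"
  using comparison_linear_and_cycle by blast

lemma comparison_map_Suc: "rF (Suc k) (comparison_map (Suc k) g) = comparison_map k (rG (Suc k) g)"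
proof (rule comparison_map_Suc_if_lifts)
  fix c assume "c < bG (Suc k)"
  then show "lifts_column k (comparison k) c (\<lambda>l. comparison (Suc k) l c)"
    using someI_ex[OF lifts_column_exists] comparison_linear_and_cycle
    by (simp add: comparison_map_def)
qed

definition cone_rank :: "nat \<Rightarrow> nat" where
  "cone_rank i = bF i + tgt_rank bG i"

text \<open>In block form the differentials of the cone are \<open>(dF\<^sub>0 u)\<close> and
  \<open>((dF\<^sub>i\<^sub>+\<^sub>1, comparison\<^sub>i), (0, -dG\<^sub>i))\<close>.\<close>

primrec cone_diff :: "nat \<Rightarrow> nat \<Rightarrow> nat \<Rightarrow> ('v, 'k) mpoly" where
  "cone_diff 0 = (\<lambda>j k. if k < bF 0 then dF 0 0 k else u)"
| "cone_diff (Suc i) = (\<lambda>j k.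
     if j < bF i then (if k < bF (Suc i) then dF (Suc i) j k else comparison i j (k - bF (Suc i)))
     else (if k < bF (Suc i) then 0 else - dG i (j - bF i) (k - bF (Suc i))))"

abbreviation rC where "rC \<equiv> res_map cone_rank cone_diff"

lemma res_map_cone_0: "rC 0 (vec_join (bF 0) f g) = (\<lambda>j. if j < 1 then rF 0 f 0 + u * g 0 else 0)"
  unfolding res_map_eq_mat_vec
  by (simp add: mat_vec_def tgt_rank_def cone_rank_def sum_lessThan_add vec_join_def fun_eq_iff)

lemma res_map_cone_Suc:
  "rC (Suc i) (vec_join (bF (Suc i)) f g) =
   vec_join (bF i) (\<lambda>j. rF (Suc i) f j + comparison_map i g j) (\<lambda>c. - rG i g c)"
proof (rule ext)
  fix j
  have "tgt_rank cone_rank (Suc i) = bF i + tgt_rank bG i" "cone_rank (Suc i) = bF (Suc i) + bG i"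
    by (simp_all add: tgt_rank_def cone_rank_def)
  then show "rC (Suc i) (vec_join (bF (Suc i)) f g) j =
      vec_join (bF i) (\<lambda>j. rF (Suc i) f j + comparison_map i g j) (\<lambda>c. - rG i g c) j"
    unfolding res_map_eq_mat_vec comparison_map_def
    by (cases "j < bF i") (auto simp: mat_vec_def tgt_rank_def sum_lessThan_add vec_join_def sum_negf)
qed

lemma vec_join_in_free_elems_cone:
  "f \<in> free_elems bF i \<Longrightarrow> (\<And>c. tgt_rank bG i \<le> c \<Longrightarrow> g c = 0) \<Longrightarrow>
   vec_join (bF i) f g \<in> free_elems cone_rank i"
  by (auto simp: free_elems_def vec_join_def cone_rank_def)

lemma obtain_cone_components:
  assumes "v \<in> free_elems cone_rank i"
  obtains f g where "v = vec_join (bF i) f g" "f \<in> free_elems bF i" "\<And>c. tgt_rank bG i \<le> c \<Longrightarrow> g c = 0"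
proof
  show "v = vec_join (bF i) (\<lambda>k. if k < bF i then v k else 0) (\<lambda>c. v (bF i + c))"
    by (rule vec_join_split)
  show "(\<lambda>k. if k < bF i then v k else 0) \<in> free_elems bF i" by (simp add: free_elems_def)
  fix c assume "tgt_rank bG i \<le> c" then show "v (bF i + c) = 0"
    using assms by (simp add: free_elems_def cone_rank_def)
qed

lemma cone_complex:
  assumes v: "v \<in> free_elems cone_rank (Suc i)"
  shows "rC i (rC (Suc i) v) = (\<lambda>_. 0)"
proof -
  obtain f g where fg: "v = vec_join (bF (Suc i)) f g" "f \<in> free_elems bF (Suc i)"
    "\<And>c. tgt_rank bG (Suc i) \<le> c \<Longrightarrow> g c = 0"
    using obtain_cone_components[OF v] by blast
  have g: "g \<in> free_elems bG i" using fg(3) by (simp add: free_elems_def tgt_rank_def)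
  have w: "rC (Suc i) v = vec_join (bF i) (\<lambda>j. rF (Suc i) f j + comparison_map i g j) (\<lambda>c. - rG i g c)"
    using fg(1) res_map_cone_Suc by simp
  show ?thesis
  proof (cases i)
    case 0
    have "rF 0 (\<lambda>j. rF (Suc 0) f j + comparison_map 0 g j) 0 = u * rG 0 g 0"
      using linear_free_resolution_complex[OF F fg(2)[unfolded 0]] comparison_map_0[of g]
      by (simp add: res_map_add fun_eq_iff 0)
    moreover have "rC 0 (rC (Suc 0) v) = (\<lambda>j. if j < 1 then
        rF 0 (\<lambda>j. rF (Suc 0) f j + comparison_map 0 g j) 0 + u * (- rG 0 g 0) else 0)"
      using w 0 res_map_cone_0 by simp
    ultimately show ?thesis using 0 by (simp add: fun_eq_iff)
  next
    case (Suc i')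
    have "rF (Suc i') (\<lambda>j. rF (Suc (Suc i')) f j + comparison_map (Suc i') g j) =
        comparison_map i' (rG (Suc i') g)"
      using linear_free_resolution_complex[OF F fg(2)[unfolded Suc]] comparison_map_Suc[of i' g]
      by (simp add: res_map_add fun_eq_iff)
    moreover have "rG i' (\<lambda>c. - rG (Suc i') g c) = (\<lambda>_. 0)"
      using linear_free_resolution_complex[OF G g[unfolded Suc]] by (simp add: res_map_uminus fun_eq_iff)
    ultimately show ?thesis
      using w Suc res_map_cone_Suc[of i'] by (simp add: comparison_map_uminus vec_join_zero)
  qed
qed

lemma cone_cycle_lift:
  assumes f: "f \<in> free_elems bF i" and g: "\<And>c. tgt_rank bG i \<le> c \<Longrightarrow> g c = 0"
    and cycle: "rC i (vec_join (bF i) f g) = (\<lambda>_. 0)"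
  obtains g' where "g' \<in> free_elems bG i" "g = rG i g'"
    "rF i (\<lambda>j. f j + comparison_map i g' j) = (\<lambda>_. 0)"
proof (cases i)
  case 0
  have e0: "rF 0 f 0 + u * g 0 = 0" using cycle res_map_cone_0 0 by (metis less_one)
  then have "g 0 * u = rF 0 (\<lambda>k. - f k) 0"
    by (simp add: res_map_uminus mult.commute eq_neg_iff_add_eq_0 add.commute)
  then have "g 0 * u \<in> I"
    using linear_free_resolution_image[OF F] free_elems_uminus[OF f] 0 by blast
  then obtain g' where g': "g' \<in> free_elems bG 0" "g 0 = rG 0 g' 0"
    using colon linear_free_resolution_image[OF G] by blast
  have "g = rG 0 g'"
  proof
    fix c show "g c = rG 0 g' c"
      using g'(2) g[of c] 0 by (cases c) (simp_all add: res_map_def tgt_rank_def)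
  qed
  moreover have "rF 0 (\<lambda>j. f j + comparison_map 0 g' j) = (\<lambda>_. 0)"
    using e0 \<open>g = rG 0 g'\<close> comparison_map_0[of g']
    by (simp add: res_map_add res_map_def tgt_rank_def fun_eq_iff)
  ultimately show ?thesis using that g'(1) 0 by blast
next
  case (Suc i')
  have "g \<in> free_elems bG i'" using g Suc by (simp add: free_elems_def tgt_rank_def)
  have "vec_join (bF i') (\<lambda>j. rF (Suc i') f j + comparison_map i' g j) (\<lambda>c. - rG i' g c) = (\<lambda>_. 0)"
    using cycle res_map_cone_Suc Suc by simp
  from vec_join_eq_zero[OF this]
  have z1: "\<And>j. j < bF i' \<Longrightarrow> rF (Suc i') f j + comparison_map i' g j = 0" and "rG i' g = (\<lambda>_. 0)"
    by auto
  then obtain g' where g': "g' \<in> free_elems bG (Suc i')" "g = rG (Suc i') g'"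
    using linear_free_resolution_exact[OF G \<open>g \<in> free_elems bG i'\<close>] by blast
  have "rF (Suc i') (\<lambda>j. f j + comparison_map (Suc i') g' j) j = 0" for j
  proof -
    have "rF (Suc i') (\<lambda>j. f j + comparison_map (Suc i') g' j) j = rF (Suc i') f j + comparison_map i' g j"
      using comparison_map_Suc[of i' g'] g'(2) by (simp add: res_map_add)
    then show ?thesis
      using z1 by (cases "j < bF i'") (simp_all add: res_map_def tgt_rank_def comparison_map_def mat_vec_def)
  qed
  then show ?thesis using that g' Suc by blast
qed

lemma cone_exact:
  assumes v: "v \<in> free_elems cone_rank i" and cycle: "rC i v = (\<lambda>_. 0)"
  shows "\<exists>w\<in>free_elems cone_rank (Suc i). v = rC (Suc i) w"
proof -
  obtain f g where fg: "v = vec_join (bF i) f g" "f \<in> free_elems bF i" "\<And>c. tgt_rank bG i \<le> c \<Longrightarrow> g c = 0"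
    using obtain_cone_components[OF v] by blast
  obtain g' where g': "g' \<in> free_elems bG i" "g = rG i g'"
    and f_cycle: "rF i (\<lambda>j. f j + comparison_map i g' j) = (\<lambda>_. 0)"
    using cone_cycle_lift[where g = g, OF fg(2) fg(3)] cycle fg(1) by blast
  obtain f' where f': "f' \<in> free_elems bF (Suc i)" "(\<lambda>j. f j + comparison_map i g' j) = rF (Suc i) f'"
    using linear_free_resolution_exact[OF F free_elems_add[OF fg(2) comparison_map_in_free_elems] f_cycle]
    by blast
  let ?w = "vec_join (bF (Suc i)) f' (\<lambda>c. - g' c)"
  have "?w \<in> free_elems cone_rank (Suc i)"
    by (rule vec_join_in_free_elems_cone[OF f'(1)]) (use g'(1) in \<open>simp add: free_elems_def tgt_rank_def\<close>)
  moreover have "rC (Suc i) ?w = v"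
    unfolding res_map_cone_Suc fg(1)
  proof (rule vec_join_cong)
    fix k
    have "rF (Suc i) f' k = f k + comparison_map i g' k" using fun_cong[OF f'(2), of k] by simp
    then show "rF (Suc i) f' k + comparison_map i (\<lambda>c. - g' c) k = f k"
      by (simp add: comparison_map_uminus)
  qed (use g'(2) in \<open>simp add: res_map_uminus\<close>)
  ultimately show ?thesis by blast
qed

lemma cone_diff_degrees:
  "k < cone_rank 0 \<Longrightarrow> homogeneous (cone_diff 0 0 k) t"
  "j < tgt_rank cone_rank (Suc i) \<Longrightarrow> k < cone_rank (Suc i) \<Longrightarrow> homogeneous (cone_diff (Suc i) j k) 1"
proof -
  show "k < cone_rank 0 \<Longrightarrow> homogeneous (cone_diff 0 0 k) t"
    using linear_free_resolution_generator_degree[OF F] homogeneous_u by simp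
  assume j: "j < tgt_rank cone_rank (Suc i)" and k: "k < cone_rank (Suc i)"
  have "homogeneous (dG i (j - bF i) (k - bF (Suc i))) 1" if "\<not> j < bF i" "\<not> k < bF (Suc i)"
    using linear_free_resolution_generator_degree[OF G] linear_free_resolution_linear[OF G] j k that
    by (cases i) (auto simp: tgt_rank_def cone_rank_def)
  then show "homogeneous (cone_diff (Suc i) j k) 1"
    using j k linear_free_resolution_linear[OF F, of j i k] comparison_linear[of "k - bF (Suc i)" i j]
    by (auto simp: tgt_rank_def cone_rank_def intro: homogeneous_uminus)
qed

lemma cone_image: "(\<Union>v\<in>free_elems cone_rank 0. {rC 0 v 0}) = {p + r * u | p r. p \<in> I}"
proof (intro equalityI subsetI)
  fix x assume "x \<in> (\<Union>v\<in>free_elems cone_rank 0. {rC 0 v 0})"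
  then obtain v where v: "v \<in> free_elems cone_rank 0" "x = rC 0 v 0" by blast
  obtain f g where fg: "v = vec_join (bF 0) f g" "f \<in> free_elems bF 0"
    using obtain_cone_components[OF v(1)] by blast
  have "x = rF 0 f 0 + g 0 * u" using v(2) fg(1) res_map_cone_0 by (simp add: mult.commute)
  moreover have "rF 0 f 0 \<in> I" using linear_free_resolution_image[OF F] fg(2) by blast
  ultimately show "x \<in> {p + r * u | p r. p \<in> I}" by blast
next
  fix x assume "x \<in> {p + r * u | p r. p \<in> I}"
  then obtain p r where pr: "x = p + r * u" "p \<in> I" by blast
  obtain f where f: "f \<in> free_elems bF 0" "p = rF 0 f 0"
    using linear_free_resolution_image[OF F] pr(2) by blast
  let ?v = "vec_join (bF 0) f (\<lambda>c. if c = 0 then r else 0)"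
  have "?v \<in> free_elems cone_rank 0"
    by (rule vec_join_in_free_elems_cone[OF f(1)]) (simp add: tgt_rank_def)
  moreover have "rC 0 ?v 0 = x" using pr(1) f(2) res_map_cone_0 by (simp add: mult.commute)
  ultimately show "x \<in> (\<Union>v\<in>free_elems cone_rank 0. {rC 0 v 0})" by blast
qed

lemma linear_free_resolution_cone: "linear_free_resolution {p + r * u | p r. p \<in> I} t cone_rank cone_diff"
  unfolding linear_free_resolution_def
proof (intro conjI allI impI)
  fix i j k :: nat assume "0 < i" "j < tgt_rank cone_rank i" "k < cone_rank i"
  then show "homogeneous (cone_diff i j k) 1"
    using cone_diff_degrees(2)[of j "i - 1" k] by (cases i) auto
next
  fix i
  show "{v \<in> free_elems cone_rank i. rC i v = (\<lambda>_. 0)} = rC (Suc i) ` free_elems cone_rank (Suc i)"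
    using cone_exact cone_complex res_map_Suc_in_free_elems by blast
qed (use cone_diff_degrees(1) cone_image in auto)

end

lemma linear_free_resolution_add_generator:
  assumes "linear_free_resolution I t bF dF" "linear_free_resolution J 1 bG dG"
    "\<And>r. r \<in> J \<longleftrightarrow> r * u \<in> I" "homogeneous u t"
  shows "\<exists>b d. linear_free_resolution {p + r * u | p r. p \<in> I} t b d"
proof -
  interpret mapping_cone I t bF dF J bG dG u using assms by unfold_locales
  show ?thesis using linear_free_resolution_cone by blast
qed

lemma linear_free_resolution_insert:
  assumes "linear_free_resolution (ideal_gen G) t bF dF" "finite G" "g \<notin> G" "homogeneous g t"
    and "linear_free_resolution J 1 bG dG" "\<And>r. r \<in> J \<longleftrightarrow> r * g \<in> ideal_gen G"
  shows "\<exists>b d. linear_free_resolution (ideal_gen (insert g G)) t b d"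
  using linear_free_resolution_add_generator[OF assms(1,5,6,4)] ideal_gen_insert[OF assms(2,3)] by simp

section \<open>Linear quotients\<close>

definition var_ideal :: "'v set \<Rightarrow> ('v, 'k::comm_ring_1) mpoly set" where
  "var_ideal S = ideal_gen (monom ` (\<lambda>s. Poly_Mapping.single s 1) ` S)"

lemma mult_monom_mem_var_ideal_iff:
  assumes "finite S"
  shows "r * monom m \<in> var_ideal S \<longleftrightarrow>
    (\<forall>n\<in>Poly_Mapping.keys r. Poly_Mapping.keys (n + m) \<inter> S \<noteq> {})"
proof -
  have "(\<exists>h. n + m = Poly_Mapping.single s 1 + h) \<longleftrightarrow> s \<in> Poly_Mapping.keys (n + m)"
    for n :: "'a \<Rightarrow>\<^sub>0 nat" and s
    by (subst exists_add_single_iff) (simp add: in_keys_iff)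
  then have "(\<exists>s\<in>S. \<exists>h. n + m = Poly_Mapping.single s 1 + h) \<longleftrightarrow> Poly_Mapping.keys (n + m) \<inter> S \<noteq> {}"
    for n :: "'a \<Rightarrow>\<^sub>0 nat"
    by blast
  then show ?thesis
    unfolding var_ideal_def using assms by (simp add: mult_monom_mem_ideal_gen_monom_iff)
qed

lemma mem_var_ideal_iff:
  assumes "finite S"
  shows "r \<in> var_ideal S \<longleftrightarrow> (\<forall>n\<in>Poly_Mapping.keys r. Poly_Mapping.keys n \<inter> S \<noteq> {})"
  using mult_monom_mem_var_ideal_iff[OF assms, of r 0] by (simp add: monom_def)

lemma mult_var_mem_var_ideal_iff:
  assumes "finite S" "s \<notin> S"
  shows "r * monom (Poly_Mapping.single s 1) \<in> var_ideal S \<longleftrightarrow> r \<in> var_ideal S"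
proof -
  have "Poly_Mapping.keys (n + Poly_Mapping.single s 1) \<inter> S = Poly_Mapping.keys n \<inter> S"
    for n :: "'a \<Rightarrow>\<^sub>0 nat"
  proof -
    have "x \<in> S \<Longrightarrow> Poly_Mapping.lookup (n + Poly_Mapping.single s 1) x = Poly_Mapping.lookup n x" for x
      using assms(2) by (auto simp: lookup_add lookup_single when_def)
    then show ?thesis by (auto simp: in_keys_iff)
  qed
  then show ?thesis
    by (subst mult_monom_mem_var_ideal_iff[OF assms(1)], subst mem_var_ideal_iff[OF assms(1)]) simp
qed

lemma monom_var_notin:
  assumes "s \<notin> S"
  shows "(monom (Poly_Mapping.single s 1) :: ('v, 'k::comm_ring_1) mpoly) \<notin>
    monom ` (\<lambda>s. Poly_Mapping.single s 1) ` S"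
proof
  assume "(monom (Poly_Mapping.single s 1) :: ('v, 'k) mpoly) \<in> monom ` (\<lambda>s. Poly_Mapping.single s 1) ` S"
  then obtain s' where "s' \<in> S" "Poly_Mapping.single s (1::nat) = Poly_Mapping.single s' 1"
    using inj_monom[where 'k='k] by (auto dest: injD)
  then show False
    using assms by (metis lookup_single_eq lookup_single_not_eq zero_neq_one)
qed

text \<open>The Koszul complex, obtained as an iterated mapping cone: multiplication by a new
  variable is injective modulo the ideal of the others, so the colon ideal is the ideal
  itself.\<close>

lemma linear_free_resolution_var_ideal:
  assumes "finite S"
  shows "\<exists>b d. linear_free_resolution (var_ideal S :: ('v, 'k::comm_ring_1) mpoly set) 1 b d"
  using assms
proof (induction S rule: finite_induct)
  case empty
  show ?case
    using linear_free_resolution_zero_ideal by (fastforce simp: var_ideal_def ideal_gen_empty)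
next
  case (insert s S)
  obtain b d where res: "linear_free_resolution (var_ideal S :: ('v, 'k) mpoly set) 1 b d"
    using insert.IH by blast
  have "homogeneous (monom (Poly_Mapping.single s 1) :: ('v, 'k) mpoly) 1"
    using homogeneous_monom[of "Poly_Mapping.single s 1"] by (simp add: mdeg_single)
  then show ?case
    using linear_free_resolution_insert[OF res[unfolded var_ideal_def] _ monom_var_notin[OF insert.hyps(2)]
        _ res[unfolded var_ideal_def] mult_var_mem_var_ideal_iff[OF insert.hyps, symmetric, unfolded var_ideal_def]]
      insert.hyps(1)
    by (simp add: var_ideal_def)
qed

text \<open>Listing the generators \<open>x\<^sub>g\<close>, \<open>g \<in> M\<close>, by decreasing \<open>key\<close>, the condition says that
  every colon ideal \<open>(x\<^sub>g : key u < key g) : x\<^sub>u\<close> is generated by variables.\<close>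

definition linear_quotients :: "('a set \<Rightarrow> nat) \<Rightarrow> 'a set set \<Rightarrow> bool" where
  "linear_quotients key M \<longleftrightarrow> inj_on key M \<and>
     (\<forall>u\<in>M. \<forall>g\<in>M. key u < key g \<longrightarrow> (\<exists>a\<in>g - u. \<exists>g'\<in>M. key u < key g' \<and> g' - u = {a}))"

lemma linear_quotientsD:
  assumes "linear_quotients key M" "u \<in> M" "g \<in> M" "key u < key g"
  obtains a g' where "a \<in> g - u" "g' \<in> M" "key u < key g'" "g' - u = {a}"
proof -
  have "\<exists>a\<in>g - u. \<exists>g'\<in>M. key u < key g' \<and> g' - u = {a}"
    using assms unfolding linear_quotients_def by simp
  then obtain a where "a \<in> g - u" "\<exists>g'\<in>M. key u < key g' \<and> g' - u = {a}" ..
  then obtain g' where "g' \<in> M" "key u < key g'" "g' - u = {a}" by auto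
  then show ?thesis using that \<open>a \<in> g - u\<close> by simp
qed

lemma linear_quotients_remove_min:
  assumes lq: "linear_quotients key M" and min: "\<And>g. g \<in> M \<Longrightarrow> key u \<le> key g"
  shows "linear_quotients key (M - {u})"
  unfolding linear_quotients_def
proof (intro conjI ballI impI)
  show "inj_on key (M - {u})"
    using lq unfolding linear_quotients_def by (auto intro: inj_on_subset)
  fix u' g assume u': "u' \<in> M - {u}" and g: "g \<in> M - {u}" and lt: "key u' < key g"
  obtain a g' where a: "a \<in> g - u'" and g': "g' \<in> M" "key u' < key g'" "g' - u' = {a}"
    using linear_quotientsD[OF lq _ _ lt] u' g by auto
  have "g' \<noteq> u" using min[of u'] u' g'(2) by auto
  with a g' show "\<exists>a\<in>g - u'. \<exists>g'\<in>M - {u}. key u' < key g' \<and> g' - u' = {a}"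
    by (intro bexI[where x = a] bexI[where x = g']) auto
qed

lemma linear_quotients_min_colon:
  assumes lq: "linear_quotients key M" and u: "u \<in> M" and min: "\<And>g. g \<in> M \<Longrightarrow> key u \<le> key g"
  shows "\<forall>g\<in>M - {u}. \<exists>a\<in>g - u. \<exists>g'\<in>M - {u}. g' - u = {a}"
proof
  fix g assume g: "g \<in> M - {u}"
  have "key u \<noteq> key g"
    using g u lq unfolding linear_quotients_def inj_on_def by blast
  with min[of g] g have "key u < key g" by simp
  then obtain a g' where a: "a \<in> g - u" and g': "g' \<in> M" "key u < key g'" "g' - u = {a}"
    using linear_quotientsD[OF lq u] g by blast
  have "g' \<noteq> u" using g'(2) by auto
  with a g' show "\<exists>a\<in>g - u. \<exists>g'\<in>M - {u}. g' - u = {a}"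
    by (intro bexI[where x = a] bexI[where x = g']) auto
qed

lemma exists_diff_subset_iff:
  assumes "\<forall>g\<in>M. \<exists>a\<in>g - u. \<exists>g'\<in>M. g' - u = {a}"
  shows "(\<exists>g\<in>M. g - u \<subseteq> K) \<longleftrightarrow> K \<inter> {a. \<exists>g\<in>M. g - u = {a}} \<noteq> {}"
proof
  assume "\<exists>g\<in>M. g - u \<subseteq> K"
  then obtain g where g: "g \<in> M" "g - u \<subseteq> K" by blast
  obtain a where "a \<in> g - u" "\<exists>g'\<in>M. g' - u = {a}" using bspec[OF assms g(1)] ..
  then have "a \<in> K \<inter> {a. \<exists>g\<in>M. g - u = {a}}" using g(2) by auto
  then show "K \<inter> {a. \<exists>g\<in>M. g - u = {a}} \<noteq> {}" by auto
next
  assume "K \<inter> {a. \<exists>g\<in>M. g - u = {a}} \<noteq> {}"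
  then obtain a where "a \<in> K" "\<exists>g\<in>M. g - u = {a}" by auto
  then show "\<exists>g\<in>M. g - u \<subseteq> K" by auto
qed

lemma mem_var_ideal_iff_colon:
  assumes "finite M" "\<forall>g\<in>M. finite g" "finite u"
    and "\<forall>g\<in>M. \<exists>a\<in>g - u. \<exists>g'\<in>M. g' - u = {a}"
  shows "r \<in> (var_ideal {a. \<exists>g\<in>M. g - u = {a}} :: ('v, 'k::comm_ring_1) mpoly set) \<longleftrightarrow>
    r * sqfree_monom u \<in> ideal_gen (sqfree_monom ` M)"
proof -
  let ?S = "{a. \<exists>g\<in>M. g - u = {a}}"
  have "?S \<subseteq> \<Union>M" by blast
  moreover have "finite (\<Union>M)" using assms(1,2) by simp
  ultimately have "finite ?S" by (rule finite_subset)
  have "r * sqfree_monom u \<in> ideal_gen (sqfree_monom ` M) \<longleftrightarrow>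
      r * monom (sqfree_exp u) \<in> ideal_gen (monom ` sqfree_exp ` M)"
    by (simp add: image_image sqfree_monom_eq_monom)
  also have "\<dots> \<longleftrightarrow> (\<forall>n\<in>Poly_Mapping.keys r. \<exists>g\<in>sqfree_exp ` M. \<exists>h. n + sqfree_exp u = g + h)"
    by (rule mult_monom_mem_ideal_gen_monom_iff) (use assms(1) in simp)
  also have "\<dots> \<longleftrightarrow> (\<forall>n\<in>Poly_Mapping.keys r. \<exists>g\<in>M. g - u \<subseteq> Poly_Mapping.keys n)"
  proof -
    have "(\<exists>h. n + sqfree_exp u = sqfree_exp g + h) \<longleftrightarrow> g - u \<subseteq> Poly_Mapping.keys n" if "g \<in> M" for g n
      using exists_add_sqfree_exp_iff[of g u n] assms(2,3) that by simp
    then show ?thesis by auto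
  qed
  also have "\<dots> \<longleftrightarrow> (\<forall>n\<in>Poly_Mapping.keys r. Poly_Mapping.keys n \<inter> ?S \<noteq> {})"
    using exists_diff_subset_iff[OF assms(4)] by simp
  also have "\<dots> \<longleftrightarrow> r \<in> var_ideal ?S"
    by (rule mem_var_ideal_iff[symmetric]) fact
  finally show ?thesis by blast
qed

lemma linear_free_resolution_insert_min:
  assumes M: "finite M" "\<forall>g\<in>M. finite g \<and> card g = t" and lq: "linear_quotients key M"
    and u: "u \<in> M" "\<And>g. g \<in> M \<Longrightarrow> key u \<le> key g"
    and F: "linear_free_resolution (ideal_gen (sqfree_monom ` (M - {u})) :: ('v, 'k::comm_ring_1) mpoly set) t bF dF"
  shows "\<exists>b d. linear_free_resolution (ideal_gen (sqfree_monom ` M) :: ('v, 'k) mpoly set) t b d"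
proof -
  let ?S = "{a. \<exists>g\<in>M - {u}. g - u = {a}}"
  have colon: "r \<in> var_ideal ?S \<longleftrightarrow> r * sqfree_monom u \<in> ideal_gen (sqfree_monom ` (M - {u}))" for r
    by (rule mem_var_ideal_iff_colon[OF _ _ _ linear_quotients_min_colon[OF lq u]]) (use M u(1) in auto)
  have "?S \<subseteq> \<Union>M" by blast
  moreover have "finite (\<Union>M)" using M by simp
  ultimately have "finite ?S" by (rule finite_subset)
  then obtain bG dG where G: "linear_free_resolution (var_ideal ?S :: ('v, 'k) mpoly set) 1 bG dG"
    using linear_free_resolution_var_ideal by blast
  have "sqfree_monom u \<notin> (sqfree_monom ` (M - {u}) :: ('v, 'k) mpoly set)"
    using M u(1) by (auto simp: sqfree_monom_eq_iff)
  moreover have "homogeneous (sqfree_monom u :: ('v, 'k) mpoly) t"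
    using homogeneous_sqfree_monom M u(1) by fastforce
  ultimately have "\<exists>b d. linear_free_resolution
      (ideal_gen (insert (sqfree_monom u) (sqfree_monom ` (M - {u}))) :: ('v, 'k) mpoly set) t b d"
    using linear_free_resolution_insert[OF F _ _ _ G colon] M(1) by simp
  moreover have "insert (sqfree_monom u) (sqfree_monom ` (M - {u})) = (sqfree_monom ` M :: ('v, 'k) mpoly set)"
    using u(1) by blast
  ultimately show ?thesis by simp
qed

lemma linear_free_resolution_if_linear_quotients:
  assumes "finite M" "\<forall>g\<in>M. finite g \<and> card g = t" "linear_quotients key M"
  shows "\<exists>b d. linear_free_resolution (ideal_gen (sqfree_monom ` M) :: ('v, 'k::comm_ring_1) mpoly set) t b d"
  using assms
proof (induction "card M" arbitrary: M rule: less_induct)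
  case less
  show ?case
  proof (cases "M = {}")
    case True
    then show ?thesis using linear_free_resolution_zero_ideal by (fastforce simp: ideal_gen_empty)
  next
    case False
    define u where "u = (ARG_MIN key g. g \<in> M)"
    have u: "u \<in> M" "\<And>g. g \<in> M \<Longrightarrow> key u \<le> key g"
      using arg_min_nat_lemma[of "\<lambda>g. g \<in> M" _ key] False unfolding u_def by auto
    have "card (M - {u}) < card M" using card_Diff1_less[OF less.prems(1) u(1)] .
    then obtain bF dF
      where "linear_free_resolution (ideal_gen (sqfree_monom ` (M - {u})) :: ('v, 'k) mpoly set) t bF dF"
      using less.hyps[of "M - {u}"] less.prems(1,2) linear_quotients_remove_min[OF less.prems(3) u(2)] by auto
    then show ?thesis using linear_free_resolution_insert_min[OF less.prems u] by blast
  qed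
qed

section \<open>Induced paths and cycles\<close>

locale undirected_graph =
  fixes E :: "'v \<Rightarrow> 'v \<Rightarrow> bool"
  assumes adj_sym: "E x y \<Longrightarrow> E y x" and adj_irrefl: "\<not> E x x"
begin

definition adj_in :: "'v set \<Rightarrow> 'v \<Rightarrow> 'v \<Rightarrow> bool" where
  "adj_in W x y \<longleftrightarrow> E x y \<and> x \<in> W \<and> y \<in> W"

abbreviation reach :: "'v set \<Rightarrow> 'v \<Rightarrow> 'v \<Rightarrow> bool" where
  "reach W \<equiv> (adj_in W)\<^sup>*\<^sup>*"

lemma adj_inI: "E x y \<Longrightarrow> x \<in> W \<Longrightarrow> y \<in> W \<Longrightarrow> adj_in W x y"
  by (simp add: adj_in_def)

lemma reach_sym: "reach W x y \<Longrightarrow> reach W y x"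
proof (induction rule: rtranclp_induct)
  case (step y z)
  then have "adj_in W z y" by (auto simp: adj_in_def adj_sym)
  then show ?case using step.IH by (rule converse_rtranclp_into_rtranclp)
qed simp

lemma reach_mem: "reach W x y \<Longrightarrow> x \<in> W \<Longrightarrow> y \<in> W"
  by (induction rule: rtranclp_induct) (auto simp: adj_in_def)

lemma reach_step: "reach W x y \<Longrightarrow> E y z \<Longrightarrow> y \<in> W \<Longrightarrow> z \<in> W \<Longrightarrow> reach W x z"
  by (rule rtranclp.rtrancl_into_rtrancl) (auto simp: adj_in_def)

definition walk_through :: "'v set \<Rightarrow> 'v \<Rightarrow> 'v \<Rightarrow> nat \<Rightarrow> (nat \<Rightarrow> 'v) \<Rightarrow> bool" where
  "walk_through C x y N q \<longleftrightarrow> q 0 = x \<and> q N = y \<and> (\<forall>k<N. E (q k) (q (Suc k))) \<and>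
     (\<forall>k. 0 < k \<longrightarrow> k < N \<longrightarrow> q k \<in> C)"

definition induced_path :: "'v set \<Rightarrow> 'v \<Rightarrow> 'v \<Rightarrow> nat \<Rightarrow> (nat \<Rightarrow> 'v) \<Rightarrow> bool" where
  "induced_path C x y n p \<longleftrightarrow> p 0 = x \<and> p n = y \<and> 2 \<le> n \<and> (\<forall>k. 0 < k \<longrightarrow> k < n \<longrightarrow> p k \<in> C) \<and>
     (\<forall>i\<le>n. \<forall>j\<le>n. E (p i) (p j) \<longleftrightarrow> (j = Suc i \<or> i = Suc j)) \<and> inj_on p {..n}"

lemma induced_pathD:
  assumes "induced_path C x y n p"
  shows "p 0 = x" "p n = y" "2 \<le> n" "\<And>k. 0 < k \<Longrightarrow> k < n \<Longrightarrow> p k \<in> C"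
    "\<And>i j. i \<le> n \<Longrightarrow> j \<le> n \<Longrightarrow> E (p i) (p j) \<longleftrightarrow> (j = Suc i \<or> i = Suc j)"
    "inj_on p {..n}"
  using assms unfolding induced_path_def by auto

lemma walk_through_if_reach:
  assumes "reach C c1 c2" "c1 \<in> C" "E x c1" "E c2 y"
  shows "\<exists>N q. walk_through C x y N q"
  using assms(1,2,4)
proof (induction arbitrary: y rule: rtranclp_induct)
  case base
  then have "walk_through C x y 2 (\<lambda>k. if k = 0 then x else if k = 1 then c1 else y)"
    using assms(3) by (auto simp: walk_through_def less_2_cases_iff)
  then show ?case by blast
next
  case (step z z')
  then have "z' \<in> C" "E z' y" "E z z'" by (auto simp: adj_in_def)
  obtain N q where q: "walk_through C x z' N q" using step.IH[OF step.prems(1) \<open>E z z'\<close>] by blast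
  then have "walk_through C x y (Suc N) (q(Suc N := y))"
    using \<open>z' \<in> C\<close> \<open>E z' y\<close> unfolding walk_through_def by (auto simp: less_Suc_eq)
  then show ?case by blast
qed

lemma walk_through_shortcut:
  assumes w: "walk_through C x y N q" and id: "i + 1 + d \<le> N" and d: "1 \<le> d"
    and e: "E (q i) (q (i + 1 + d))"
  shows "walk_through C x y (N - d) (\<lambda>k. if k \<le> i then q k else q (k + d))"
  unfolding walk_through_def
proof (intro conjI allI impI)
  let ?q = "\<lambda>k. if k \<le> i then q k else q (k + d)"
  show "?q 0 = x" using w by (simp add: walk_through_def)
  have "\<not> N - d \<le> i" "N - d + d = N" using id d by linarith+
  then show "?q (N - d) = y" using w by (simp add: walk_through_def)
  fix k
  show "E (?q k) (?q (Suc k))" if "k < N - d"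
  proof -
    consider "k < i" | "k = i" | "k > i" by linarith
    then show ?thesis
      by cases (use w id e that in \<open>simp_all add: walk_through_def add.commute\<close>)
  qed
  show "0 < k \<Longrightarrow> k < N - d \<Longrightarrow> ?q k \<in> C"
    using w id d unfolding walk_through_def by (cases "k \<le> i") auto
qed

context
  fixes C x y N q
  assumes walk: "walk_through C x y N q"
    and shortest: "\<And>N' q'. walk_through C x y N' q' \<Longrightarrow> N \<le> N'"
    and ends: "x \<noteq> y" "\<not> E x y" "x \<notin> C" "y \<notin> C"
begin

lemma shortest_walk_no_chord: "i + 2 \<le> j \<Longrightarrow> j \<le> N \<Longrightarrow> \<not> E (q i) (q j)"
  using walk_through_shortcut[OF walk, of i "j - i - 1"] shortest by fastforce

lemma shortest_walk_length: "2 \<le> N"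
proof (rule ccontr)
  assume "\<not> 2 \<le> N"
  then consider "N = 0" | "N = 1" by linarith
  then show False
    by cases (use walk ends in \<open>auto simp: walk_through_def\<close>)
qed

lemma shortest_walk_adj: "i \<le> N \<Longrightarrow> j \<le> N \<Longrightarrow> E (q i) (q j) \<longleftrightarrow> (j = Suc i \<or> i = Suc j)"
proof -
  assume ij: "i \<le> N" "j \<le> N"
  have step: "E (q k) (q (Suc k))" if "k < N" for k
    using walk that by (simp add: walk_through_def)
  consider "j = Suc i" | "i = Suc j" | "i = j" | "i + 2 \<le> j" | "j + 2 \<le> i" by linarith
  then show ?thesis
  proof cases
    case 5
    then show ?thesis using shortest_walk_no_chord[of j i] ij adj_sym by auto
  qed (use ij step adj_sym adj_irrefl shortest_walk_no_chord in auto)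
qed

lemma shortest_walk_inj: "inj_on q {..N}"
proof -
  have "q i \<noteq> q j" if ij: "i < j" "j \<le> N" for i j
  proof (cases "j < N")
    case True
    have "E (q j) (q (Suc j))" using walk True by (simp add: walk_through_def)
    then show ?thesis using shortest_walk_adj[of i "Suc j"] ij True by auto
  next
    case False
    then have "q j = y" using walk ij by (simp add: walk_through_def)
    moreover have "q i \<noteq> y"
    proof (cases "i = 0")
      case True
      then show ?thesis using walk ends by (simp add: walk_through_def)
    next
      case False
      then have "q i \<in> C" using walk ij by (simp add: walk_through_def)
      then show ?thesis using ends by auto
    qed
    ultimately show ?thesis by simp
  qed
  then show ?thesis
    by (intro inj_onI) (metis atMost_iff linorder_neqE_nat)
qed

lemma shortest_walk_induced_path: "induced_path C x y N q"
  using walk shortest_walk_length shortest_walk_adj shortest_walk_inj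
  unfolding walk_through_def induced_path_def by blast

end

lemma induced_path_exists:
  assumes "x \<noteq> y" "\<not> E x y" "x \<notin> C" "y \<notin> C"
    and "c1 \<in> C" "E x c1" "E c2 y" "reach C c1 c2"
  shows "\<exists>n p. induced_path C x y n p"
proof -
  have ex: "\<exists>N q. walk_through C x y N q"
    using walk_through_if_reach assms(5-8) by blast
  define N where "N = (LEAST N. \<exists>q. walk_through C x y N q)"
  obtain q where "walk_through C x y N q"
    unfolding N_def using LeastI_ex[OF ex] by blast
  moreover have "\<And>N' q'. walk_through C x y N' q' \<Longrightarrow> N \<le> N'"
    unfolding N_def by (rule Least_le) blast
  ultimately show ?thesis
    using shortest_walk_induced_path assms(1-4) by blast
qed

definition path_glue :: "nat \<Rightarrow> (nat \<Rightarrow> 'v) \<Rightarrow> (nat \<Rightarrow> 'v) \<Rightarrow> nat \<Rightarrow> 'v" where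
  "path_glue n p r k = (if k \<le> n then p k else r (k - n))"

context
  fixes A B x y n m p r
  assumes p: "induced_path A x y n p" and r: "induced_path B y x m r"
    and disjoint: "A \<inter> B = {}" and no_edge: "\<And>a b. a \<in> A \<Longrightarrow> b \<in> B \<Longrightarrow> \<not> E a b"
    and ends: "x \<notin> A \<union> B" "y \<notin> A \<union> B"
begin

lemma path_glue_first_notin:
  assumes "k \<le> n"
  shows "path_glue n p r k \<notin> B"
proof -
  consider "k = 0" | "k = n" | "0 < k" "k < n" using assms by linarith
  then show ?thesis
  proof cases
    case 3
    then have "p k \<in> A" by (rule induced_pathD(4)[OF p])
    then show ?thesis using disjoint 3 by (auto simp: path_glue_def)
  qed (use induced_pathD(1,2)[OF p] ends in \<open>auto simp: path_glue_def\<close>)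
qed

lemma path_glue_second_in: "n < k \<Longrightarrow> k < n + m \<Longrightarrow> path_glue n p r k \<in> B"
  using induced_pathD(4)[OF r, of "k - n"] by (simp add: path_glue_def)

lemma inj_on_path_glue: "inj_on (path_glue n p r) {0..<n + m}"
proof (rule inj_onI)
  fix i j assume ij: "i \<in> {0..<n + m}" "j \<in> {0..<n + m}" "path_glue n p r i = path_glue n p r j"
  consider "i \<le> n" "j \<le> n" | "n < i" "n < j" | "i \<le> n" "n < j" | "n < i" "j \<le> n" by linarith
  then show "i = j"
  proof cases
    case 1
    then show ?thesis using ij induced_pathD(6)[OF p] by (auto simp: path_glue_def inj_on_def)
  next
    case 2
    then have "r (i - n) = r (j - n)" using ij by (simp add: path_glue_def)
    then have "i - n = j - n" using induced_pathD(6)[OF r] ij unfolding inj_on_def by auto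
    then show ?thesis using 2 by simp
  next
    case 3
    then show ?thesis using path_glue_first_notin[OF 3(1)] path_glue_second_in[OF 3(2)] ij by auto
  next
    case 4
    then show ?thesis using path_glue_first_notin[OF 4(2)] path_glue_second_in[OF 4(1)] ij by auto
  qed
qed

lemma path_glue_adj_across:
  assumes i: "i \<le> n" and j: "n < j" "j < n + m"
  shows "E (path_glue n p r i) (path_glue n p r j) \<longleftrightarrow>
    (j = Suc i mod (n + m) \<or> i = Suc j mod (n + m))"
proof -
  define j' where "j' = j - n"
  have j': "0 < j'" "j' < m" "path_glue n p r j = r j'" "j = n + j'"
    using j by (auto simp: j'_def path_glue_def)
  have sj: "Suc j mod (n + m) = (if Suc j = n + m then 0 else Suc j)" using j(2) by (simp add: mod_Suc)
  have si: "Suc i mod (n + m) = Suc i" using i induced_pathD(3)[OF r] by simp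
  have n2: "2 \<le> n" by (rule induced_pathD(3)[OF p])
  consider "i = 0" | "i = n" | "0 < i" "i < n" using i by linarith
  then show ?thesis
  proof cases
    case 1
    then have "E (path_glue n p r i) (path_glue n p r j) \<longleftrightarrow> E (r m) (r j')"
      using j' induced_pathD(1)[OF p] induced_pathD(2)[OF r] by (simp add: path_glue_def)
    also have "\<dots> \<longleftrightarrow> m = Suc j'" using induced_pathD(5)[OF r, of m j'] j' by auto
    finally show ?thesis using 1 j' n2 sj si by auto
  next
    case 2
    then have "E (path_glue n p r i) (path_glue n p r j) \<longleftrightarrow> E (r 0) (r j')"
      using j' induced_pathD(2)[OF p] induced_pathD(1)[OF r] by (simp add: path_glue_def)
    also have "\<dots> \<longleftrightarrow> j' = 1" using induced_pathD(5)[OF r, of 0 j'] j' by auto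
    finally show ?thesis using 2 j' n2 sj si by auto
  next
    case 3
    then have "\<not> E (path_glue n p r i) (path_glue n p r j)"
      using no_edge[OF induced_pathD(4)[OF p 3] induced_pathD(4)[OF r j'(1,2)]] j'
      by (simp add: path_glue_def)
    moreover have "\<not> (j = Suc i mod (n + m) \<or> i = Suc j mod (n + m))" using 3 j' sj si by auto
    ultimately show ?thesis by simp
  qed
qed

lemma path_glue_adj:
  assumes ij: "i < n + m" "j < n + m"
  shows "E (path_glue n p r i) (path_glue n p r j) \<longleftrightarrow>
    (j = Suc i mod (n + m) \<or> i = Suc j mod (n + m))"
proof -
  have m2: "2 \<le> m" by (rule induced_pathD(3)[OF r])
  consider "i \<le> n" "j \<le> n" | "n < i" "n < j" | "i \<le> n" "n < j" | "n < i" "j \<le> n" by linarith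
  then show ?thesis
  proof cases
    case 1
    then have "Suc i mod (n + m) = Suc i" "Suc j mod (n + m) = Suc j" using m2 by simp_all
    then show ?thesis using induced_pathD(5)[OF p 1] 1 by (simp add: path_glue_def)
  next
    case 2
    have "j = Suc i mod (n + m) \<longleftrightarrow> j = Suc i" "i = Suc j mod (n + m) \<longleftrightarrow> i = Suc j"
      using 2 ij by (cases "Suc i = n + m"; cases "Suc j = n + m"; simp add: mod_Suc)+
    moreover have "E (r (i - n)) (r (j - n)) \<longleftrightarrow> (j - n = Suc (i - n) \<or> i - n = Suc (j - n))"
      using induced_pathD(5)[OF r, of "i - n" "j - n"] ij by simp
    moreover have "(j - n = Suc (i - n) \<or> i - n = Suc (j - n)) \<longleftrightarrow> (j = Suc i \<or> i = Suc j)"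
      using 2 by auto
    ultimately show ?thesis using 2 by (simp add: path_glue_def)
  next
    case 3
    then show ?thesis using path_glue_adj_across ij by simp
  next
    case 4
    have "E (path_glue n p r i) (path_glue n p r j) \<longleftrightarrow> E (path_glue n p r j) (path_glue n p r i)"
      using adj_sym by blast
    then show ?thesis using path_glue_adj_across[OF 4(2) 4(1) ij(1)] by auto
  qed
qed

lemma induced_cycle_path_glue: "induced_cycle E (map (path_glue n p r) [0..<n + m])"
  unfolding induced_cycle_def
proof (intro conjI allI impI)
  show "distinct (map (path_glue n p r) [0..<n + m])"
    using inj_on_path_glue by (simp add: distinct_map atLeast0LessThan)
  show "3 \<le> length (map (path_glue n p r) [0..<n + m])"
    using induced_pathD(3)[OF p] induced_pathD(3)[OF r] by simp
  fix i j
  assume "i < length (map (path_glue n p r) [0..<n + m])" "j < length (map (path_glue n p r) [0..<n + m])"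
  then show "E (map (path_glue n p r) [0..<n + m] ! i) (map (path_glue n p r) [0..<n + m] ! j) \<longleftrightarrow>
      (j = Suc i mod length (map (path_glue n p r) [0..<n + m]) \<or>
       i = Suc j mod length (map (path_glue n p r) [0..<n + m]))"
    using path_glue_adj by simp
qed

end

section \<open>Simplicial vertices of chordal graphs\<close>

definition simplicial :: "'v set \<Rightarrow> 'v \<Rightarrow> bool" where
  "simplicial V v \<longleftrightarrow> v \<in> V \<and> (\<forall>x\<in>V. \<forall>y\<in>V. E v x \<longrightarrow> E v y \<longrightarrow> x \<noteq> y \<longrightarrow> E x y)"

lemma simplicial_if_clique: "is_clique E V \<Longrightarrow> v \<in> V \<Longrightarrow> simplicial V v"
  unfolding is_clique_def simplicial_def by blast

lemma reach_nonadjacent_pair: "reach {a, b} a z \<Longrightarrow> \<not> E a b \<Longrightarrow> z = a"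
proof (induction rule: rtranclp_induct)
  case (step y z)
  then show ?case using adj_irrefl by (auto simp: adj_in_def)
qed simp

lemma reach_in_component: "reach W a z \<Longrightarrow> reach {z. reach W a z} a z"
proof (induction rule: rtranclp_induct)
  case (step y z)
  have "reach W a z" using step.hyps by (rule rtranclp.rtrancl_into_rtrancl)
  moreover have "E y z" using step.hyps(2) by (simp add: adj_in_def)
  ultimately have "adj_in {z. reach W a z} y z"
    by (intro adj_inI) (use step.hyps(1) in simp_all)
  with step.IH show ?case by (rule rtranclp.rtrancl_into_rtrancl)
qed simp

lemma component_connected:
  "reach W a c1 \<Longrightarrow> reach W a c2 \<Longrightarrow> reach {z. reach W a z} c1 c2"
  using reach_in_component reach_sym rtranclp_trans by metis

lemma components_disjoint_no_edge:
  assumes "\<not> reach W a b" "a \<in> W" "b \<in> W" "reach W a x" "reach W b y"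
  shows "x \<noteq> y" "\<not> E x y"
proof -
  show "x \<noteq> y" using assms(1,4,5) reach_sym rtranclp_trans by metis
  show "\<not> E x y"
  proof
    assume "E x y"
    then have "reach W a y"
      using reach_step[OF assms(4)] reach_mem assms(2-5) by blast
    then show False using assms(1,5) reach_sym rtranclp_trans by metis
  qed
qed

definition separates :: "'v set \<Rightarrow> 'v \<Rightarrow> 'v \<Rightarrow> 'v set \<Rightarrow> bool" where
  "separates V a b S \<longleftrightarrow> S \<subseteq> V - {a, b} \<and> \<not> reach (V - S) a b"

lemma separates_commute: "separates V a b S \<longleftrightarrow> separates V b a S"
  unfolding separates_def using reach_sym by blast

lemma minimal_separator_neighbour:
  assumes "finite V" "a \<in> V" and sep: "separates V a b S"
    and min: "\<And>S'. separates V a b S' \<Longrightarrow> card S \<le> card S'" and s: "s \<in> S"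
  shows "\<exists>z. reach (V - S) a z \<and> E s z"
proof (rule ccontr)
  assume no: "\<not> (\<exists>z. reach (V - S) a z \<and> E s z)"
  have aW: "a \<in> V - S" using sep assms(2) by (auto simp: separates_def)
  have stays_outside_s: "reach (V - S) a z" if "reach (insert s (V - S)) a z" for z
    using that
  proof (induction rule: rtranclp_induct)
    case (step y z)
    have "y \<in> V - S" using reach_mem[OF step.IH aW] .
    moreover have "z \<noteq> s"
    proof
      assume "z = s"
      then have "E s y" using step.hyps(2) adj_sym by (simp add: adj_in_def)
      then show False using no step.IH by blast
    qed
    moreover have "E y z" "z \<in> V - S \<or> z = s" using step.hyps(2) by (auto simp: adj_in_def)
    ultimately show ?case using reach_step[OF step.IH] by blast
  qed simp
  have "V - (S - {s}) = insert s (V - S)" using s sep by (auto simp: separates_def)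
  then have "separates V a b (S - {s})"
    using sep stays_outside_s by (auto simp: separates_def)
  then have "card S \<le> card (S - {s})" by (rule min)
  moreover have "finite S" using sep assms(1) by (auto simp: separates_def intro: finite_subset)
  ultimately show False using s card_Diff1_less[of S s] by linarith
qed

lemma simplicial_lift_from_component:
  assumes S: "S \<subseteq> V" and a: "a \<in> V - S"
    and x: "reach (V - S) a x" "simplicial ({z. reach (V - S) a z} \<union> S) x"
  shows "simplicial V x"
  unfolding simplicial_def
proof (intro conjI ballI impI)
  let ?A = "{z. reach (V - S) a z}"
  have A: "?A \<subseteq> V - S" using reach_mem a by blast
  then show "x \<in> V" using x(1) by auto
  have nbr: "z \<in> ?A \<union> S" if "z \<in> V" "E x z" for z
  proof (cases "z \<in> S")
    case False
    then have "reach (V - S) a z" using reach_step[OF x(1) that(2)] A x(1) that(1) by blast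
    then show ?thesis by simp
  qed simp
  fix u w assume "u \<in> V" "w \<in> V" "E x u" "E x w" "u \<noteq> w"
  then show "E u w" using x(2) nbr unfolding simplicial_def by blast
qed

text \<open>Read backwards, \<open>q\<close> lists a perfect elimination ordering.\<close>

definition perfect_elimination_order :: "'v set \<Rightarrow> ('v \<Rightarrow> nat) \<Rightarrow> bool" where
  "perfect_elimination_order V q \<longleftrightarrow> inj_on q V \<and>
     (\<forall>a\<in>V. \<forall>w1\<in>V. \<forall>w2\<in>V. E a w1 \<longrightarrow> E a w2 \<longrightarrow> q w1 < q a \<longrightarrow> q w2 < q a \<longrightarrow> w1 \<noteq> w2 \<longrightarrow> E w1 w2)"

lemma perfect_elimination_order_insert:
  assumes peo: "perfect_elimination_order V q" and bound: "\<forall>w\<in>V. q w < k"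
    and v: "v \<notin> V" "simplicial (insert v V) v"
  shows "perfect_elimination_order (insert v V) (q(v := k))"
  unfolding perfect_elimination_order_def
proof (intro conjI ballI impI)
  have "k \<notin> q ` V" using bound by auto
  then have "inj_on (q(v := k)) V"
    using peo by (intro inj_on_fun_updI) (simp_all add: perfect_elimination_order_def)
  then show "inj_on (q(v := k)) (insert v V)"
    using \<open>k \<notin> q ` V\<close> v(1) by auto
  fix a w1 w2 assume a: "a \<in> insert v V" and w: "w1 \<in> insert v V" "w2 \<in> insert v V"
    and adj: "E a w1" "E a w2" and less: "(q(v := k)) w1 < (q(v := k)) a" "(q(v := k)) w2 < (q(v := k)) a"
    and "w1 \<noteq> w2"
  show "E w1 w2"
  proof (cases "a = v")
    case True
    then show ?thesis using v(2) w adj \<open>w1 \<noteq> w2\<close> unfolding simplicial_def by blast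
  next
    case False
    then have "a \<in> V" "q a < k" using a bound by auto
    then have "w1 \<noteq> v" "w2 \<noteq> v" using less False by auto
    then have "q w1 < q a" "q w2 < q a" "w1 \<in> V" "w2 \<in> V" using less False w by auto
    then show ?thesis
      using peo \<open>a \<in> V\<close> adj \<open>w1 \<noteq> w2\<close> unfolding perfect_elimination_order_def by blast
  qed
qed

end

locale chordal_graph = undirected_graph +
  assumes chordal: "chordal E"
begin

text \<open>Two nonadjacent vertices of a minimal separator would lie on an induced cycle of length at
  least four through the two separated components.\<close>

lemma minimal_separator_clique:
  assumes "finite V" "a \<in> V" "b \<in> V" and sep: "separates V a b S"
    and min: "\<And>S'. separates V a b S' \<Longrightarrow> card S \<le> card S'"
  shows "is_clique E S"
  unfolding is_clique_def
proof (intro ballI impI)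
  fix s1 s2 assume s: "s1 \<in> S" "s2 \<in> S" "s1 \<noteq> s2"
  let ?W = "V - S"
  define A where "A = {z. reach ?W a z}"
  define B where "B = {z. reach ?W b z}"
  have W: "a \<in> ?W" "b \<in> ?W" "\<not> reach ?W a b" using sep assms(2,3) by (auto simp: separates_def)
  have sep': "separates V b a S" and min': "\<And>S'. separates V b a S' \<Longrightarrow> card S \<le> card S'"
    using sep min separates_commute by auto
  have AB: "A \<inter> B = {}" "\<And>x y. x \<in> A \<Longrightarrow> y \<in> B \<Longrightarrow> \<not> E x y"
    using components_disjoint_no_edge[OF W(3,1,2)] by (auto simp: A_def B_def)
  have notAB: "s \<notin> A" "s \<notin> B" "s \<notin> A \<union> B" if "s \<in> S" for s
    using that reach_mem W by (auto simp: A_def B_def)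
  obtain c1 c2 where c: "c1 \<in> A" "E s1 c1" "c2 \<in> A" "E s2 c2"
    using minimal_separator_neighbour[OF assms(1,2) sep min s(1)]
      minimal_separator_neighbour[OF assms(1,2) sep min s(2)] unfolding A_def by blast
  obtain d1 d2 where d: "d1 \<in> B" "E s1 d1" "d2 \<in> B" "E s2 d2"
    using minimal_separator_neighbour[OF assms(1,3) sep' min' s(1)]
      minimal_separator_neighbour[OF assms(1,3) sep' min' s(2)] unfolding B_def by blast
  show "E s1 s2"
  proof (rule ccontr)
    assume "\<not> E s1 s2"
    then obtain n p where p: "induced_path A s1 s2 n p"
      using induced_path_exists[OF s(3) _ notAB(1)[OF s(1)] notAB(1)[OF s(2)] c(1,2) adj_sym[OF c(4)]]
        component_connected c(1,3) by (auto simp: A_def)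
    obtain m r where r: "induced_path B s2 s1 m r"
      using induced_path_exists[OF s(3)[symmetric] _ notAB(2)[OF s(2)] notAB(2)[OF s(1)] d(3,4) adj_sym[OF d(2)]]
        \<open>\<not> E s1 s2\<close> adj_sym component_connected d(1,3) by (auto simp: B_def)
    have "induced_cycle E (map (path_glue n p r) [0..<n + m])"
      by (rule induced_cycle_path_glue[OF p r AB notAB(3)[OF s(1)] notAB(3)[OF s(2)]])
    then have "n + m = 3" using chordal unfolding chordal_def by fastforce
    then show False using induced_pathD(3)[OF p] induced_pathD(3)[OF r] by simp
  qed
qed

lemma simplicial_in_component:
  assumes "finite V"
    and IH: "\<And>V'. V' \<subset> V \<Longrightarrow> is_clique E V' \<or> (\<exists>x y. simplicial V' x \<and> simplicial V' y \<and> x \<noteq> y \<and> \<not> E x y)"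
    and S: "is_clique E S" "S \<subseteq> V" and a: "a \<in> V - S" and b: "b \<in> V - S" "\<not> reach (V - S) a b"
  shows "\<exists>x. reach (V - S) a x \<and> simplicial V x"
proof -
  let ?A = "{z. reach (V - S) a z}"
  have "?A \<subseteq> V - S" using reach_mem a by blast
  moreover have "b \<notin> ?A" using b by simp
  ultimately have "?A \<union> S \<subset> V" using S(2) b(1) by blast
  then have "\<exists>x\<in>?A. simplicial (?A \<union> S) x"
  proof (cases "is_clique E (?A \<union> S)")
    case True
    then show ?thesis using simplicial_if_clique by blast
  next
    case False
    then obtain x y where xy: "simplicial (?A \<union> S) x" "simplicial (?A \<union> S) y" "\<not> E x y" "x \<noteq> y"
      using IH[OF \<open>?A \<union> S \<subset> V\<close>] by blast
    then have "x \<in> ?A \<or> y \<in> ?A"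
      using S(1) unfolding simplicial_def is_clique_def by blast
    then show ?thesis using xy by blast
  qed
  then show ?thesis using simplicial_lift_from_component[OF S(2) a] by blast
qed

lemma two_nonadjacent_simplicial:
  assumes "finite V"
  shows "is_clique E V \<or> (\<exists>x y. simplicial V x \<and> simplicial V y \<and> x \<noteq> y \<and> \<not> E x y)"
  using assms
proof (induction "card V" arbitrary: V rule: less_induct)
  case less
  show ?case
  proof (cases "is_clique E V")
    case False
    then obtain a b where ab: "a \<in> V" "b \<in> V" "a \<noteq> b" "\<not> E a b" unfolding is_clique_def by blast
    have "V - (V - {a, b}) = {a, b}" using ab by auto
    then have "separates V a b (V - {a, b})"
      unfolding separates_def using reach_nonadjacent_pair[of a b b] ab by auto
    then obtain S where sep: "separates V a b S" and min: "\<And>S'. separates V a b S' \<Longrightarrow> card S \<le> card S'"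
      using arg_min_nat_lemma[of "separates V a b"] by metis
    have S: "is_clique E S" "S \<subseteq> V"
      using minimal_separator_clique[OF less.prems ab(1,2) sep min] sep by (auto simp: separates_def)
    have W: "a \<in> V - S" "b \<in> V - S" "\<not> reach (V - S) a b" "\<not> reach (V - S) b a"
      using sep ab reach_sym by (auto simp: separates_def)
    have IH: "is_clique E V' \<or> (\<exists>x y. simplicial V' x \<and> simplicial V' y \<and> x \<noteq> y \<and> \<not> E x y)"
      if "V' \<subset> V" for V'
      using less.hyps[OF psubset_card_mono[OF less.prems that]] less.prems that
      by (meson finite_subset psubset_imp_subset)
    obtain x where x: "reach (V - S) a x" "simplicial V x"
      using simplicial_in_component[OF less.prems IH S W(1,2,3)] by blast
    obtain y where y: "reach (V - S) b y" "simplicial V y"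
      using simplicial_in_component[OF less.prems IH S W(2,1,4)] by blast
    show ?thesis using components_disjoint_no_edge[OF W(3,1,2) x(1) y(1)] x(2) y(2) by blast
  qed simp
qed

lemma simplicial_exists:
  assumes "finite V" "V \<noteq> {}"
  obtains v where "simplicial V v"
  using two_nonadjacent_simplicial[OF assms(1)] simplicial_if_clique assms(2) by blast

lemma perfect_elimination_order_exists:
  assumes "finite V"
  shows "\<exists>q. perfect_elimination_order V q \<and> (\<forall>v\<in>V. q v < card V)"
  using assms
proof (induction "card V" arbitrary: V rule: less_induct)
  case less
  show ?case
  proof (cases "V = {}")
    case True
    then show ?thesis by (simp add: perfect_elimination_order_def)
  next
    case False
    obtain v where v: "simplicial V v" using simplicial_exists[OF less.prems False] by blast
    then have "v \<in> V" by (simp add: simplicial_def)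
    then have V: "V = insert v (V - {v})" "card (V - {v}) = card V - 1" "card (V - {v}) < card V"
      using less.prems card_Diff1_less[OF less.prems] by auto
    obtain q where "perfect_elimination_order (V - {v}) q" "\<forall>w\<in>V - {v}. q w < card V - 1"
      using less.hyps[OF V(3)] less.prems V(2) by auto
    then have "perfect_elimination_order V (q(v := card V - 1))"
      using perfect_elimination_order_insert[of "V - {v}" q "card V - 1" v] v V(1) by auto
    moreover have "\<forall>w\<in>V. (q(v := card V - 1)) w < card V"
    proof
      fix w assume "w \<in> V"
      have "0 < card V" using False less.prems by (simp add: card_gt_0_iff)
      then show "(q(v := card V - 1)) w < card V"
        using bspec[OF \<open>\<forall>w\<in>V - {v}. q w < card V - 1\<close>, of w] \<open>w \<in> V\<close> by (cases "w = v") auto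
    qed
    ultimately show ?thesis by blast
  qed
qed

end

section \<open>The non-cliques have linear quotients\<close>

text \<open>Binary encoding of a finite set: the sets are compared by the \<open>q\<close>-largest element of
  their symmetric difference.\<close>

definition set_key :: "('v \<Rightarrow> nat) \<Rightarrow> 'v set \<Rightarrow> nat" where
  "set_key q S = (\<Sum>v\<in>S. 2 ^ q v)"

lemma sum_pow2_less:
  assumes "finite A" "inj_on q A" "\<forall>x\<in>A. q x < n"
  shows "(\<Sum>x\<in>A. (2::nat) ^ q x) < 2 ^ n"
proof -
  have "(\<Sum>x\<in>A. (2::nat) ^ q x) = (\<Sum>k\<in>q ` A. 2 ^ k)"
    using sum.reindex[OF assms(2), of "\<lambda>k. (2::nat) ^ k"] by simp
  also have "\<dots> \<le> (\<Sum>k<n. 2 ^ k)"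
    by (rule sum_mono2) (use assms in auto)
  also have "\<dots> < 2 ^ n" by (induction n) auto
  finally show ?thesis .
qed

lemma set_key_less_if_max_in:
  assumes fin: "finite g" "finite u" and inj: "inj q" and a: "a \<in> g - u"
    and max: "\<forall>x\<in>sym_diff g u. q x \<le> q a"
  shows "set_key q u < set_key q g"
proof -
  have "q x < q a" if "x \<in> u - g" for x
  proof -
    have "x \<noteq> a" using a that by blast
    then have "q x \<noteq> q a" using inj by (auto dest: injD)
    moreover have "q x \<le> q a" using max that by blast
    ultimately show ?thesis by simp
  qed
  then have "set_key q (u - g) < 2 ^ q a"
    unfolding set_key_def using fin inj by (intro sum_pow2_less) (auto intro: inj_on_subset)
  also have "\<dots> \<le> set_key q (g - u)"
    unfolding set_key_def using a fin by (intro member_le_sum) auto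
  finally show ?thesis
    using sum.Int_Diff[OF fin(1), of "\<lambda>v. (2::nat) ^ q v" u] sum.Int_Diff[OF fin(2), of "\<lambda>v. (2::nat) ^ q v" g]
    by (simp add: set_key_def Int_commute)
qed

lemma sym_diff_max:
  fixes q :: "'v \<Rightarrow> nat"
  assumes "finite g" "finite u" "g \<noteq> u"
  obtains a where "a \<in> sym_diff g u" "\<forall>x\<in>sym_diff g u. q x \<le> q a"
proof -
  let ?D = "sym_diff g u"
  have "?D \<noteq> {}" "finite ?D" using assms by auto
  then have "Max (q ` ?D) \<in> q ` ?D" by (intro Max_in) auto
  then obtain a where a: "a \<in> ?D" "Max (q ` ?D) = q a" by auto
  have "\<forall>x\<in>?D. q x \<le> q a" unfolding a(2)[symmetric] using \<open>finite ?D\<close> by auto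
  then show ?thesis using that a(1) by blast
qed

lemma set_key_less_imp_max_in:
  assumes fin: "finite g" "finite u" and inj: "inj q" and lt: "set_key q u < set_key q g"
  obtains a where "a \<in> g - u" "\<forall>x\<in>sym_diff g u. q x \<le> q a"
proof -
  obtain a where a: "a \<in> sym_diff g u" "\<forall>x\<in>sym_diff g u. q x \<le> q a"
    using sym_diff_max[OF fin] lt by blast
  have "a \<notin> u - g"
  proof
    assume "a \<in> u - g"
    then have "set_key q g < set_key q u"
      using set_key_less_if_max_in[OF fin(2,1) inj] a(2) by (simp add: Un_commute)
    then show False using lt by simp
  qed
  then show ?thesis using that a by blast
qed

lemma inj_on_set_key:
  assumes inj: "inj q"
  shows "inj_on (set_key q) {S. finite S}"
proof (rule inj_onI, rule ccontr)
  fix g u assume "g \<in> {S. finite S}" "u \<in> {S. finite S}" and eq: "set_key q g = set_key q u" and "g \<noteq> u"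
  then have fin: "finite g" "finite u" by auto
  obtain a where a: "a \<in> sym_diff g u" "\<forall>x\<in>sym_diff g u. q x \<le> q a"
    using sym_diff_max[OF fin \<open>g \<noteq> u\<close>] by blast
  then consider "a \<in> g - u" | "a \<in> u - g" by blast
  then show False
  proof cases
    case 1
    then show False using set_key_less_if_max_in[OF fin inj 1 a(2)] eq by simp
  next
    case 2
    then show False using set_key_less_if_max_in[OF fin(2,1) inj 2] a(2) eq by (simp add: Un_commute)
  qed
qed

context undirected_graph
begin

text \<open>Each of two elements below \<open>a\<close> is adjacent to \<open>a\<close> (in the trade removing the other),
  so they are adjacent by the elimination order; every other pair survives some trade.\<close>

lemma clique_if_all_exchanges_clique:
  assumes peo: "perfect_elimination_order UNIV q" and "a \<notin> u"
    and two: "w \<in> u" "w' \<in> u" "w \<noteq> w'" "q w < q a" "q w' < q a"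
    and cliques: "\<And>w. w \<in> u \<Longrightarrow> q w < q a \<Longrightarrow> is_clique E (insert a (u - {w}))"
  shows "is_clique E u"
  unfolding is_clique_def
proof (intro ballI impI)
  fix x y assume xy: "x \<in> u" "y \<in> u" "x \<noteq> y"
  show "E x y"
  proof (cases "\<exists>z\<in>u. q z < q a \<and> z \<noteq> x \<and> z \<noteq> y")
    case True
    then obtain z where "z \<in> u" "q z < q a" "z \<noteq> x" "z \<noteq> y" by blast
    then show ?thesis using cliques xy unfolding is_clique_def by blast
  next
    case False
    then have "{x, y} = {w, w'}" using two by blast
    then have below: "q x < q a" "q y < q a" using two by auto
    have "a \<noteq> x" "a \<noteq> y" using \<open>a \<notin> u\<close> xy by auto
    then have "E a y" "E a x"
      using cliques[OF xy(1) below(1)] cliques[OF xy(2) below(2)] xy unfolding is_clique_def by auto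
    then show ?thesis using peo below xy(3) unfolding perfect_elimination_order_def by blast
  qed
qed

lemma nonclique_exchange:
  assumes peo: "perfect_elimination_order UNIV q"
    and u: "finite u" "\<not> is_clique E u" and g: "finite g" "card g = card u" "\<not> is_clique E g"
    and a: "a \<in> g - u" and max: "\<forall>x\<in>sym_diff g u. q x \<le> q a"
  shows "\<exists>w\<in>u. q w < q a \<and> \<not> is_clique E (insert a (u - {w}))"
proof (rule ccontr)
  assume "\<not> ?thesis"
  then have cliques: "\<And>w. w \<in> u \<Longrightarrow> q w < q a \<Longrightarrow> is_clique E (insert a (u - {w}))" by blast
  have inj: "inj q" using peo by (simp add: perfect_elimination_order_def)
  have above_in_g: "x \<in> g" if "x \<in> u" "\<not> q x < q a" for x
  proof -
    have "x \<noteq> a" using a that(1) by auto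
    then have "q x \<noteq> q a" using inj by (auto dest: injD)
    then show ?thesis using max that by force
  qed
  consider "\<forall>w\<in>u. \<not> q w < q a" | w where "w \<in> u" "q w < q a" "\<forall>w'\<in>u. q w' < q a \<longrightarrow> w' = w"
    | w w' where "w \<in> u" "w' \<in> u" "w \<noteq> w'" "q w < q a" "q w' < q a" by blast
  then show False
  proof cases
    case 1
    then have "u \<subseteq> g" using above_in_g by blast
    then have "u = g" using g u by (simp add: card_subset_eq)
    then show False using a by simp
  next
    case 2
    have "insert a (u - {w}) \<subseteq> g" using 2 above_in_g a by blast
    moreover have "card (insert a (u - {w})) = card g"
      using 2(1) a u g card_gt_0_iff[of u] by (auto simp: card_insert_if)
    ultimately have "insert a (u - {w}) = g" using g(1) by (simp add: card_subset_eq)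
    then show False using cliques[OF 2(1,2)] g(3) by simp
  next
    case 3
    then show False using clique_if_all_exchanges_clique[OF peo _ 3 cliques] a u(2) by blast
  qed
qed

lemma linear_quotients_noncliques:
  assumes peo: "perfect_elimination_order UNIV q"
  shows "linear_quotients (set_key q) (CH_compl t E)"
  unfolding linear_quotients_def
proof (intro conjI ballI impI)
  have inj: "inj q" using peo by (simp add: perfect_elimination_order_def)
  show "inj_on (set_key q) (CH_compl t E)"
    using inj_on_set_key[OF inj] by (rule inj_on_subset) (auto simp: CH_compl_def)
  fix u g assume u: "u \<in> CH_compl t E" and g: "g \<in> CH_compl t E" and lt: "set_key q u < set_key q g"
  have u': "finite u" "card u = t" "\<not> is_clique E u" and g': "finite g" "card g = t" "\<not> is_clique E g"
    using u g by (auto simp: CH_compl_def CH_def)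
  obtain a where a: "a \<in> g - u" "\<forall>x\<in>sym_diff g u. q x \<le> q a"
    using set_key_less_imp_max_in[OF g'(1) u'(1) inj lt] by blast
  obtain w where w: "w \<in> u" "q w < q a" "\<not> is_clique E (insert a (u - {w}))"
    using nonclique_exchange[OF peo u'(1,3) g'(1) _ g'(3) a] u'(2) g'(2) by auto
  let ?g = "insert a (u - {w})"
  have "?g \<in> CH_compl t E"
    using w a u' card_gt_0_iff[of u] by (auto simp: CH_compl_def CH_def card_insert_if)
  moreover have "set_key q u = 2 ^ q w + set_key q (u - {w})"
    using u' w unfolding set_key_def by (simp add: sum.remove)
  moreover have "set_key q ?g = 2 ^ q a + set_key q (u - {w})"
    using u' a unfolding set_key_def by simp
  moreover have "(2::nat) ^ q w < 2 ^ q a" using w(2) by simp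
  moreover have "?g - u = {a}" using a(1) by auto
  ultimately show "\<exists>a\<in>g - u. \<exists>g'\<in>CH_compl t E. set_key q u < set_key q g' \<and> g' - u = {a}"
    using a(1) by (intro bexI[where x = a] bexI[where x = ?g]) auto
qed

end

theorem theorem5p2:
  fixes E :: "'v::finite \<Rightarrow> 'v \<Rightarrow> bool" and t :: nat
  assumes "simple_graph E" and "chordal E" and "t \<ge> 2"
  shows "has_linear_resolution (edge_ideal (CH_compl t E) :: ('v, 'k::field) mpoly set) t"
proof -
  interpret chordal_graph E
    using assms(1,2) by unfold_locales (auto simp: simple_graph_def)
  obtain q where "perfect_elimination_order UNIV q"
    using perfect_elimination_order_exists[OF finite_UNIV] by blast
  then have "linear_quotients (set_key q) (CH_compl t E)"
    by (rule linear_quotients_noncliques)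
  then have "\<exists>b d. linear_free_resolution (edge_ideal (CH_compl t E) :: ('v, 'k) mpoly set) t b d"
    unfolding edge_ideal_def
    by (intro linear_free_resolution_if_linear_quotients) (auto simp: CH_compl_def)
  then show ?thesis using has_linear_resolution_if_linear_free_resolution by blast
qed

end
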